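(* Let $\mathcal T=(\mathcal S,\to)$ be a timed transition system of timed sort $\Sigma$ and $\mathcal V$ a valuation, and let $S\subseteq\mathcal S$ and a timed mu-calculus formula $\Phi$ in positive normal form be such that $S\subseteq[\![\Phi]\!]_{\mathcal V}$. Then the sequent $S\vdash^{\mathcal T}_{\mathcal V,\varepsilon}\Phi$ ($\varepsilon$ the empty definition list) has a successful timed tableau.
   Context: A timed sort is a set $\Sigma$ with $\mathbb R_{\ge0}\subseteq\Sigma$; $\mathrm{Var}$ is a countably infinite set of variables. A TTS is an LTS $(\mathcal S,\to)$, ${\to}\subseteq\mathcal S\times\Sigma\times\mathcal S$, such that for all $s,s',s''$ and $\delta,\delta'\ge0$: $s\xrightarrow{0}s$; $s\xrightarrow{\delta}s'$ and $s\xrightarrow{\delta}s''$ imply $s'=s''$; $s\xrightarrow{\delta}s'\xrightarrow{\delta'}s''$ implies $s\xrightarrow{\delta+\delta'}s''$; if $s\xrightarrow{\delta}s'$ and $\delta=\delta'+\delta''$ ($\delta',\delta''\ge0$) then $s\xrightarrow{\delta'}s''\xrightarrow{\delta''}s'$ for some $s''$. $s\xrightarrow{K}s'$ means $s\xrightarrow{a}s'$ for some $a\in K$. $\mathrm{succ}(s,\delta)$ is the unique $s'$ with $s\xrightarrow{\delta}s'$; $\mathrm{delays}(s)=\{\delta\ge0\mid\exists s'.\ s\xrightarrow{\delta}s'\}$; $\mathrm{succ}_<(s,\delta)=\{s'\mid\exists\delta'<\delta.\ s\xrightarrow{\delta'}s'\}$. Valuation $\mathcal V:\mathrm{Var}\to2^{\mathcal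 S}$. Timed formulas: $\Phi::=Z\mid\neg\Phi\mid\Phi_1\wedge\Phi_2\mid[K]\Phi\mid\forall_{\Phi_1}(\Phi_2)\mid\nu Z.\Phi$, with $Z$ positive in $\Phi$ in every $\nu Z.\Phi$. Derived: $\vee$, $\langle K\rangle\Phi=\neg[K]\neg\Phi$, $\mu Z.\Phi=\neg\nu Z.\neg\Phi[Z:=\neg Z]$, $\exists_{\Phi_1}(\Phi_2)=\neg\forall_{\neg\Phi_1}(\neg\Phi_2)$. Semantics: $[\![Z]\!]_{\mathcal V}=\mathcal V(Z)$, negation = complement, $\wedge$ = intersection, $[\![[K]\Phi]\!]_{\mathcal V}=\{s\mid\forall s'.\ s\xrightarrow{K}s'\Rightarrow s'\in[\![\Phi]\!]_{\mathcal V}\}$, $[\![\nu Z.\Phi]\!]_{\mathcal V}=\bigcup\{S'\mid S'\subseteq[\![\Phi]\!]_{\mathcal V[Z:=S']}\}$, $[\![\forall_{\Phi_1}(\Phi_2)]\!]_{\mathcal V}=\{s\mid\forall\delta\in\mathrm{delays}(s).\ \mathrm{succ}_<(s,\delta)\cap[\![\Phi_1]\!]_{\mathcal V}=\emptyset\Rightarrow\mathrm{succ}(s,\delta)\in[\![\Phi_2]\!]_{\mathcal V}\}$. Positive normal form: built from $Z,\neg Z,\wedge,\vee,[K],\langle K\rangle,\forall,\exists,\nu,\mu$. Definition lists $\Delta=(U_1=\Phi_1)\cdots(U_n=\Phi_n)$: distinct $U_i$, no $U_i$ bound in any $\Phi_j$, $U_j$ not free in $\Phi_i$ for $i\le j$.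 Sequent $S\vdash^{\mathcal T}_{\mathcal V,\Delta}\Phi$: $S\subseteq\mathcal S$, $\Phi$ in positive normal form, each $U\in\mathrm{dom}(\Delta)$ positive and not bound in $\Phi$. Rules (conclusion; premises): ($\wedge$) $S\vdash_\Delta\Phi_1\wedge\Phi_2$; $S\vdash_\Delta\Phi_1$, $S\vdash_\Delta\Phi_2$. ($\vee$) $S\vdash_\Delta\Phi_1\vee\Phi_2$; $S_1\vdash_\Delta\Phi_1$, $S_2\vdash_\Delta\Phi_2$, $S=S_1\cup S_2$. ($[K]$) $S\vdash_\Delta[K]\Phi$; $\{s'\mid\exists s\in S.\ s\xrightarrow{K}s'\}\vdash_\Delta\Phi$. ($\langle K\rangle$, witness $f:S\to\mathcal S$, $s\xrightarrow{K}f(s)$) $S\vdash_\Delta\langle K\rangle\Phi$; $f(S)\vdash_\Delta\Phi$. ($\sigma Z$) $S\vdash_\Delta\sigma Z.\Phi$; $S\vdash_{\Delta\cdot(U=\sigma Z.\Phi)}U$, $U$ fresh. (Un) $S\vdash_\Delta U$; $S\vdash_\Delta\Phi[Z:=U]$, $\Delta(U)=\sigma Z.\Phi$. (Thin) $S\vdash_\Delta\Phi$; $S'\vdash_\Delta\Phi$, $S\subseteq S'$. ($\exists$, $f:S\to\mathbb R_{\ge0}$, $f(s)\in\mathrm{delays}(s)$) $S\vdash_\Delta\exists_{\Phi_1}(\Phi_2)$; $f_<(S)\vdash_\Delta\Phi_1$, $f_=(S)\vdash_\Delta\Phi_2$, with $f_<(S)=\bigcup_{s\in S}\mathrm{succ}_<(s,f(s))$,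 $f_=(S)=\{\mathrm{succ}(s,f(s))\mid s\in S\}$. ($\forall$, $g$ with $g(s,\delta)\le\delta$ defined for all $s\in S$, $\delta\in\mathrm{delays}(s)$) $S\vdash_\Delta\forall_{\Phi_1}(\Phi_2)$; $g_<(S)\vdash_\Delta\Phi_1$, $g_=(S)\vdash_\Delta\Phi_2$, with $g_<(S)=\{\mathrm{succ}(s,g(s,\delta))\mid s\in S,\delta\in\mathrm{delays}(s),g(s,\delta)<\delta\}$ and $g_=(S)$ likewise with $g(s,\delta)=\delta$. A timed tableau is a finite nonempty ordered tree of nodes labelled by sequents over $\mathcal T,\mathcal V$, each internal node labelled by a rule application (plus $f$ or $g$ for $\langle K\rangle,\exists,\forall$) forming an instance of the rule with its ordered children, with root definition list empty and terminal leaves $n$ (sequent $S_n\vdash_\Delta\Phi$): (a) $\Phi\in\{Z,\neg Z\}$, $Z\notin\mathrm{dom}(\Delta)$; (b) $\Phi=\langle K\rangle\Psi$ and some $s\in S_n$ has no $K$-successor; (c) $\Phi=U\in\mathrm{dom}(\Delta)$ and some strict ancestor $m$ has formula $U$ with $S_n\subseteq S_m$ ($\mu$-/$\nu$-leaf according to $\Delta(U)$). Companion nodes: nodes with rule Un; companion leaves of $m$: leaves strictly below $m$ with the same formula and $S_n\subseteq S_m$, excluding companion leaves of companion nodes strictly below $m$. For a child $n'$ of $n$: $s'<_{n',n}s$ iff $s'\in S_{n'}$, $s\in S_n$ and: rule $[K]$, $s\xrightarrow{K}s'$; rule $(\langle K\rangle,f)$, $s'=f(s)$; rule $(\exists,f)$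 and ($n'$ first child, $s'\in\mathrm{succ}_<(s,f(s))$) or ($n'$ second child, $s'=\mathrm{succ}(s,f(s))$); rule $(\forall,g)$ and ($n'$ first child, $s'=\mathrm{succ}(s,g(s,\delta))$ for some $\delta\in\mathrm{delays}(s)$ with $g(s,\delta)<\delta$) or ($n'$ second child, same with $g(s,\delta)=\delta$); any other rule and $s'=s$. $\lessdot_{n',n}$ is least with $s\lessdot_{n,n}s$ and ($s'\lessdot_{n',m}s''$, $s''<_{m,n}s$)$\Rightarrow s'\lessdot_{n',n}s$. $<:_{n',n}$, $<:_m$ least with: $s'<:_m s$ iff some companion leaf $m'$ of $m$ has $s'\in S_{m'}$, $s'<:_{m',m}s$; $s'<:_{n',n}s$ iff $s'\in S_{n'}$, $s\in S_n$, and $s'\lessdot_{n',n}s$ or some companion node $m\notin\{n,n'\}$ and $t,t'\in S_m$ satisfy $s'<:_{n',m}t'$, $t'(<:_m)^+t$, $t\lessdot_{m,n}s$. A leaf is successful iff: formula $Z$ and $S_n\subseteq\mathcal V(Z)$; or $\neg Z$ and $S_n\cap\mathcal V(Z)=\emptyset$; or $\nu$-leaf; or $\mu$-leaf whose companion node $m$ has $<:_m$ well-founded. A timed tableau is successful iff all leaves are successful. *)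

theory Defs
  imports Complex_Main
begin

section \<open>Timed transition systems\<close>

text \<open>The timed sort Sigma is the type 'a; the embedding of the non-negative reals
  into Sigma is the field dly (required injective on the non-negative reals).
  States form the type 's (the state set is UNIV).\<close>

record ('s, 'a) tts =
  tr  :: "'s \<Rightarrow> 'a \<Rightarrow> 's \<Rightarrow> bool"
  dly :: "real \<Rightarrow> 'a"

definition is_TTS :: "('s, 'a) tts \<Rightarrow> bool" where
  "is_TTS T \<longleftrightarrow>
     inj_on (dly T) {0..} \<and>
     (\<forall>s. tr T s (dly T 0) s) \<and>
     (\<forall>s s' s'' \<delta>. 0 \<le> \<delta> \<longrightarrow> tr T s (dly T \<delta>) s' \<longrightarrow> tr T s (dly T \<delta>) s'' \<longrightarrow> s' = s'') \<and>
     (\<forall>s s' s'' \<delta> \<delta>'. 0 \<le> \<delta> \<longrightarrow> 0 \<le> \<delta>' \<longrightarrow> tr T s (dly T \<delta>) s' \<longrightarrow> tr T s' (dly T \<delta>') s''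
         \<longrightarrow> tr T s (dly T (\<delta> + \<delta>')) s'') \<and>
     (\<forall>s s' \<delta>' \<delta>''. 0 \<le> \<delta>' \<longrightarrow> 0 \<le> \<delta>'' \<longrightarrow> tr T s (dly T (\<delta>' + \<delta>'')) s'
         \<longrightarrow> (\<exists>s''. tr T s (dly T \<delta>') s'' \<and> tr T s'' (dly T \<delta>'') s'))"

definition ksucc :: "('s, 'a) tts \<Rightarrow> 's \<Rightarrow> 'a set \<Rightarrow> 's \<Rightarrow> bool" where
  "ksucc T s K s' \<longleftrightarrow> (\<exists>a\<in>K. tr T s a s')"

definition delays :: "('s, 'a) tts \<Rightarrow> 's \<Rightarrow> real set" where
  "delays T s = {\<delta>. 0 \<le> \<delta> \<and> (\<exists>s'. tr T s (dly T \<delta>) s')}"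

definition succ :: "('s, 'a) tts \<Rightarrow> 's \<Rightarrow> real \<Rightarrow> 's" where
  "succ T s \<delta> = (THE s'. tr T s (dly T \<delta>) s')"

definition succ_lt :: "('s, 'a) tts \<Rightarrow> 's \<Rightarrow> real \<Rightarrow> 's set" where
  "succ_lt T s \<delta> = {s'. \<exists>\<delta>'. 0 \<le> \<delta>' \<and> \<delta>' < \<delta> \<and> tr T s (dly T \<delta>') s'}"

section \<open>Core timed formulas and their semantics\<close>

datatype 'a cform =
    CVar nat
  | CNeg "'a cform"
  | CAnd "'a cform" "'a cform"
  | CBox "'a set" "'a cform"
  | CAll "'a cform" "'a cform"
  | CNu nat "'a cform"

fun pos :: "nat \<Rightarrow> 'a cform \<Rightarrow> bool" and neg :: "nat \<Rightarrow> 'a cform \<Rightarrow> bool" where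
  "pos Z (CVar Y) = True"
| "neg Z (CVar Y) = (Y \<noteq> Z)"
| "pos Z (CNeg \<phi>) = neg Z \<phi>"
| "neg Z (CNeg \<phi>) = pos Z \<phi>"
| "pos Z (CAnd \<phi> \<psi>) = (pos Z \<phi> \<and> pos Z \<psi>)"
| "neg Z (CAnd \<phi> \<psi>) = (neg Z \<phi> \<and> neg Z \<psi>)"
| "pos Z (CBox K \<phi>) = pos Z \<phi>"
| "neg Z (CBox K \<phi>) = neg Z \<phi>"
| "pos Z (CAll \<phi> \<psi>) = (pos Z \<phi> \<and> pos Z \<psi>)"
| "neg Z (CAll \<phi> \<psi>) = (neg Z \<phi> \<and> neg Z \<psi>)"
| "pos Z (CNu Y \<phi>) = (Y = Z \<or> pos Z \<phi>)"
| "neg Z (CNu Y \<phi>) = (Y = Z \<or> neg Z \<phi>)"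

fun wf_cform :: "'a cform \<Rightarrow> bool" where
  "wf_cform (CVar Z) = True"
| "wf_cform (CNeg \<phi>) = wf_cform \<phi>"
| "wf_cform (CAnd \<phi> \<psi>) = (wf_cform \<phi> \<and> wf_cform \<psi>)"
| "wf_cform (CBox K \<phi>) = wf_cform \<phi>"
| "wf_cform (CAll \<phi> \<psi>) = (wf_cform \<phi> \<and> wf_cform \<psi>)"
| "wf_cform (CNu Z \<phi>) = (pos Z \<phi> \<and> wf_cform \<phi>)"

fun csubst :: "nat \<Rightarrow> 'a cform \<Rightarrow> 'a cform \<Rightarrow> 'a cform" where
  "csubst Z t (CVar Y) = (if Y = Z then t else CVar Y)"
| "csubst Z t (CNeg \<phi>) = CNeg (csubst Z t \<phi>)"
| "csubst Z t (CAnd \<phi> \<psi>) = CAnd (csubst Z t \<phi>) (csubst Z t \<psi>)"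
| "csubst Z t (CBox K \<phi>) = CBox K (csubst Z t \<phi>)"
| "csubst Z t (CAll \<phi> \<psi>) = CAll (csubst Z t \<phi>) (csubst Z t \<psi>)"
| "csubst Z t (CNu Y \<phi>) = (if Y = Z then CNu Y \<phi> else CNu Y (csubst Z t \<phi>))"

fun sem :: "('s, 'a) tts \<Rightarrow> (nat \<Rightarrow> 's set) \<Rightarrow> 'a cform \<Rightarrow> 's set" where
  "sem T V (CVar Z) = V Z"
| "sem T V (CNeg \<phi>) = - sem T V \<phi>"
| "sem T V (CAnd \<phi> \<psi>) = sem T V \<phi> \<inter> sem T V \<psi>"
| "sem T V (CBox K \<phi>) = {s. \<forall>s'. ksucc T s K s' \<longrightarrow> s' \<in> sem T V \<phi>}"
| "sem T V (CAll \<phi> \<psi>) =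
     {s. \<forall>\<delta>\<in>delays T s. succ_lt T s \<delta> \<inter> sem T V \<phi> = {} \<longrightarrow> succ T s \<delta> \<in> sem T V \<psi>}"
| "sem T V (CNu Z \<phi>) = \<Union>{S'. S' \<subseteq> sem T (V(Z := S')) \<phi>}"

datatype 'a pform =
    PVar nat
  | PNegVar nat
  | PAnd "'a pform" "'a pform"
  | POr "'a pform" "'a pform"
  | PBox "'a set" "'a pform"
  | PDia "'a set" "'a pform"
  | PAll "'a pform" "'a pform"
  | PEx "'a pform" "'a pform"
  | PNu nat "'a pform"
  | PMu nat "'a pform"

fun to_core :: "'a pform \<Rightarrow> 'a cform" where
  "to_core (PVar Z) = CVar Z"
| "to_core (PNegVar Z) = CNeg (CVar Z)"
| "to_core (PAnd \<phi> \<psi>) = CAnd (to_core \<phi>) (to_core \<psi>)"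
| "to_core (POr \<phi> \<psi>) = CNeg (CAnd (CNeg (to_core \<phi>)) (CNeg (to_core \<psi>)))"
| "to_core (PBox K \<phi>) = CBox K (to_core \<phi>)"
| "to_core (PDia K \<phi>) = CNeg (CBox K (CNeg (to_core \<phi>)))"
| "to_core (PAll \<phi> \<psi>) = CAll (to_core \<phi>) (to_core \<psi>)"
| "to_core (PEx \<phi> \<psi>) = CNeg (CAll (CNeg (to_core \<phi>)) (CNeg (to_core \<psi>)))"
| "to_core (PNu Z \<phi>) = CNu Z (to_core \<phi>)"
| "to_core (PMu Z \<phi>) = CNeg (CNu Z (CNeg (csubst Z (CNeg (CVar Z)) (to_core \<phi>))))"

fun fvars :: "'a pform \<Rightarrow> nat set" where
  "fvars (PVar Z) = {Z}"
| "fvars (PNegVar Z) = {Z}"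
| "fvars (PAnd \<phi> \<psi>) = fvars \<phi> \<union> fvars \<psi>"
| "fvars (POr \<phi> \<psi>) = fvars \<phi> \<union> fvars \<psi>"
| "fvars (PBox K \<phi>) = fvars \<phi>"
| "fvars (PDia K \<phi>) = fvars \<phi>"
| "fvars (PAll \<phi> \<psi>) = fvars \<phi> \<union> fvars \<psi>"
| "fvars (PEx \<phi> \<psi>) = fvars \<phi> \<union> fvars \<psi>"
| "fvars (PNu Z \<phi>) = fvars \<phi> - {Z}"
| "fvars (PMu Z \<phi>) = fvars \<phi> - {Z}"

fun bvars :: "'a pform \<Rightarrow> nat set" where
  "bvars (PVar Z) = {}"
| "bvars (PNegVar Z) = {}"
| "bvars (PAnd \<phi> \<psi>) = bvars \<phi> \<union> bvars \<psi>"
| "bvars (POr \<phi> \<psi>) = bvars \<phi> \<union> bvars \<psi>"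
| "bvars (PBox K \<phi>) = bvars \<phi>"
| "bvars (PDia K \<phi>) = bvars \<phi>"
| "bvars (PAll \<phi> \<psi>) = bvars \<phi> \<union> bvars \<psi>"
| "bvars (PEx \<phi> \<psi>) = bvars \<phi> \<union> bvars \<psi>"
| "bvars (PNu Z \<phi>) = insert Z (bvars \<phi>)"
| "bvars (PMu Z \<phi>) = insert Z (bvars \<phi>)"

fun psubst :: "nat \<Rightarrow> nat \<Rightarrow> 'a pform \<Rightarrow> 'a pform" where
  "psubst Z U (PVar Y) = PVar (if Y = Z then U else Y)"
| "psubst Z U (PNegVar Y) = PNegVar (if Y = Z then U else Y)"
| "psubst Z U (PAnd \<phi> \<psi>) = PAnd (psubst Z U \<phi>) (psubst Z U \<psi>)"
| "psubst Z U (POr \<phi> \<psi>) = POr (psubst Z U \<phi>) (psubst Z U \<psi>)"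
| "psubst Z U (PBox K \<phi>) = PBox K (psubst Z U \<phi>)"
| "psubst Z U (PDia K \<phi>) = PDia K (psubst Z U \<phi>)"
| "psubst Z U (PAll \<phi> \<psi>) = PAll (psubst Z U \<phi>) (psubst Z U \<psi>)"
| "psubst Z U (PEx \<phi> \<psi>) = PEx (psubst Z U \<phi>) (psubst Z U \<psi>)"
| "psubst Z U (PNu Y \<phi>) = (if Y = Z then PNu Y \<phi> else PNu Y (psubst Z U \<phi>))"
| "psubst Z U (PMu Y \<phi>) = (if Y = Z then PMu Y \<phi> else PMu Y (psubst Z U \<phi>))"

fun boxK :: "'a pform \<Rightarrow> 'a set" where
  "boxK (PBox K \<phi>) = K"
| "boxK _ = {}"

type_synonym 'a deflist = "(nat \<times> 'a pform) list"

definition wf_deflist :: "'a deflist \<Rightarrow> bool" where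
  "wf_deflist D \<longleftrightarrow>
     distinct (map fst D) \<and>
     (\<forall>i<length D. \<forall>j<length D. fst (D ! i) \<notin> bvars (snd (D ! j))) \<and>
     (\<forall>i j. i \<le> j \<longrightarrow> j < length D \<longrightarrow> fst (D ! j) \<notin> fvars (snd (D ! i)))"

definition wf_sequent :: "'a deflist \<Rightarrow> 'a pform \<Rightarrow> bool" where
  "wf_sequent D \<Phi> \<longleftrightarrow> wf_deflist D \<and>
     (\<forall>U\<in>fst ` set D. pos U (to_core \<Phi>) \<and> U \<notin> bvars \<Phi>)"

definition fresh :: "nat \<Rightarrow> 'a deflist \<Rightarrow> 'a pform \<Rightarrow> bool" where
  "fresh U D \<Phi> \<longleftrightarrow> U \<notin> fvars \<Phi> \<union> bvars \<Phi> \<and> U \<notin> fst ` set D \<and>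
     (\<forall>d\<in>set D. U \<notin> fvars (snd d) \<union> bvars (snd d))"

section \<open>Timed tableaux\<close>

datatype ('s, 'a) rl =
    R_And | R_Or | R_Box | R_Dia "'s \<Rightarrow> 's" | R_Fix | R_Un | R_Thin
  | R_Ex "'s \<Rightarrow> real" | R_All "'s \<Rightarrow> real \<Rightarrow> real"

datatype ('s, 'a) tab =
  TNode (tS: "'s set") (tD: "'a deflist") (tF: "'a pform") (tR: "('s, 'a) rl option")
        (tC: "('s, 'a) tab list")

definition seq_of :: "('s, 'a) tab \<Rightarrow> 's set \<times> 'a deflist \<times> 'a pform" where
  "seq_of t = (tS t, tD t, tF t)"

definition rule_ok :: "('s, 'a) tts \<Rightarrow> ('s, 'a) rl \<Rightarrow> 's set \<Rightarrow> 'a deflist \<Rightarrow> 'a pform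
     \<Rightarrow> ('s set \<times> 'a deflist \<times> 'a pform) list \<Rightarrow> bool" where
  "rule_ok T r S D \<Phi> cs \<longleftrightarrow>
   (case r of
      R_And \<Rightarrow> (\<exists>\<phi> \<psi>. \<Phi> = PAnd \<phi> \<psi> \<and> cs = [(S, D, \<phi>), (S, D, \<psi>)])
    | R_Or \<Rightarrow> (\<exists>\<phi> \<psi> S1 S2. \<Phi> = POr \<phi> \<psi> \<and> S = S1 \<union> S2 \<and> cs = [(S1, D, \<phi>), (S2, D, \<psi>)])
    | R_Box \<Rightarrow> (\<exists>K \<psi>. \<Phi> = PBox K \<psi> \<and> cs = [({s'. \<exists>s\<in>S. ksucc T s K s'}, D, \<psi>)])
    | R_Dia f \<Rightarrow> (\<exists>K \<psi>. \<Phi> = PDia K \<psi> \<and> (\<forall>s\<in>S. ksucc T s K (f s)) \<and> cs = [(f ` S, D, \<psi>)])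
    | R_Fix \<Rightarrow> (\<exists>Z \<psi> U. (\<Phi> = PNu Z \<psi> \<or> \<Phi> = PMu Z \<psi>) \<and> fresh U D \<Phi> \<and>
                 cs = [(S, D @ [(U, \<Phi>)], PVar U)])
    | R_Un \<Rightarrow> (\<exists>U Z \<psi>. \<Phi> = PVar U \<and>
                 (map_of D U = Some (PNu Z \<psi>) \<or> map_of D U = Some (PMu Z \<psi>)) \<and>
                 cs = [(S, D, psubst Z U \<psi>)])
    | R_Thin \<Rightarrow> (\<exists>S'. S \<subseteq> S' \<and> cs = [(S', D, \<Phi>)])
    | R_Ex f \<Rightarrow> (\<exists>\<phi> \<psi>. \<Phi> = PEx \<phi> \<psi> \<and> (\<forall>s\<in>S. f s \<in> delays T s) \<and>
                 cs = [(\<Union>s\<in>S. succ_lt T s (f s), D, \<phi>), ((\<lambda>s. succ T s (f s)) ` S, D, \<psi>)])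
    | R_All g \<Rightarrow> (\<exists>\<phi> \<psi>. \<Phi> = PAll \<phi> \<psi> \<and>
                 (\<forall>s\<in>S. \<forall>\<delta>\<in>delays T s. 0 \<le> g s \<delta> \<and> g s \<delta> \<le> \<delta>) \<and>
                 cs = [({succ T s (g s \<delta>) | s \<delta>. s \<in> S \<and> \<delta> \<in> delays T s \<and> g s \<delta> < \<delta>}, D, \<phi>),
                       ({succ T s (g s \<delta>) | s \<delta>. s \<in> S \<and> \<delta> \<in> delays T s \<and> g s \<delta> = \<delta>}, D, \<psi>)]))"

fun subt :: "('s, 'a) tab \<Rightarrow> nat list \<Rightarrow> ('s, 'a) tab option" where
  "subt t [] = Some t"
| "subt t (i # p) = (if i < length (tC t) then subt (tC t ! i) p else None)"

definition valid :: "('s, 'a) tab \<Rightarrow> nat list \<Rightarrow> bool" where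
  "valid t p \<longleftrightarrow> subt t p \<noteq> None"

definition nS :: "('s, 'a) tab \<Rightarrow> nat list \<Rightarrow> 's set" where "nS t p = tS (the (subt t p))"
definition nD :: "('s, 'a) tab \<Rightarrow> nat list \<Rightarrow> 'a deflist" where "nD t p = tD (the (subt t p))"
definition nF :: "('s, 'a) tab \<Rightarrow> nat list \<Rightarrow> 'a pform" where "nF t p = tF (the (subt t p))"
definition nR :: "('s, 'a) tab \<Rightarrow> nat list \<Rightarrow> ('s, 'a) rl option" where "nR t p = tR (the (subt t p))"
definition nC :: "('s, 'a) tab \<Rightarrow> nat list \<Rightarrow> ('s, 'a) tab list" where "nC t p = tC (the (subt t p))"

text \<open>below m n: n is strictly below m (m is a strict ancestor of n).\<close>
definition below :: "nat list \<Rightarrow> nat list \<Rightarrow> bool" where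
  "below m n \<longleftrightarrow> (\<exists>q. q \<noteq> [] \<and> n = m @ q)"

definition is_leaf :: "('s, 'a) tab \<Rightarrow> nat list \<Rightarrow> bool" where
  "is_leaf t p \<longleftrightarrow> valid t p \<and> nC t p = []"

definition terminal :: "('s, 'a) tts \<Rightarrow> ('s, 'a) tab \<Rightarrow> nat list \<Rightarrow> bool" where
  "terminal T t n \<longleftrightarrow>
     (\<exists>Z. (nF t n = PVar Z \<or> nF t n = PNegVar Z) \<and> Z \<notin> fst ` set (nD t n)) \<or>
     (\<exists>K \<psi>. nF t n = PDia K \<psi> \<and> (\<exists>s\<in>nS t n. \<not> (\<exists>s'. ksucc T s K s'))) \<or>
     (\<exists>U. nF t n = PVar U \<and> U \<in> fst ` set (nD t n) \<and>
        (\<exists>m. below m n \<and> nF t m = PVar U \<and> nS t n \<subseteq> nS t m))"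

definition is_tableau :: "('s, 'a) tts \<Rightarrow> ('s, 'a) tab \<Rightarrow> bool" where
  "is_tableau T t \<longleftrightarrow> tD t = [] \<and>
     (\<forall>p. valid t p \<longrightarrow> wf_sequent (nD t p) (nF t p) \<and>
        (if nC t p = [] then nR t p = None \<and> terminal T t p
         else (\<exists>r. nR t p = Some r \<and> rule_ok T r (nS t p) (nD t p) (nF t p) (map seq_of (nC t p)))))"

definition comp_node :: "('s, 'a) tab \<Rightarrow> nat list \<Rightarrow> bool" where
  "comp_node t m \<longleftrightarrow> valid t m \<and> nR t m = Some R_Un"

function comp_leaf :: "('s, 'a) tab \<Rightarrow> nat list \<Rightarrow> nat list \<Rightarrow> bool" where
  "comp_leaf t m n \<longleftrightarrow>
     is_leaf t n \<and> below m n \<and> nF t n = nF t m \<and> nS t n \<subseteq> nS t m \<and>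
     \<not> (\<exists>m'. if below m m' \<and> below m' n then comp_node t m' \<and> comp_leaf t m' n else False)"
  by auto
termination
  by (relation "measure (\<lambda>(t, m, n). length n - length m)") (auto simp: below_def)

text \<open>tstep T t n i s' s: s' <_{n@[i], n} s.\<close>
definition tstep :: "('s, 'a) tts \<Rightarrow> ('s, 'a) tab \<Rightarrow> nat list \<Rightarrow> nat \<Rightarrow> 's \<Rightarrow> 's \<Rightarrow> bool" where
  "tstep T t n i s' s \<longleftrightarrow> valid t (n @ [i]) \<and> s' \<in> nS t (n @ [i]) \<and> s \<in> nS t n \<and>
     (case nR t n of
        Some R_Box \<Rightarrow> ksucc T s (boxK (nF t n)) s'
      | Some (R_Dia f) \<Rightarrow> s' = f s
      | Some (R_Ex f) \<Rightarrow> (if i = 0 then s' \<in> succ_lt T s (f s) else s' = succ T s (f s))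
      | Some (R_All g) \<Rightarrow> (\<exists>\<delta>\<in>delays T s. s' = succ T s (g s \<delta>) \<and>
                             (if i = 0 then g s \<delta> < \<delta> else g s \<delta> = \<delta>))
      | _ \<Rightarrow> s' = s)"

text \<open>ttrace T t n' n s' s: s' \<lessdot>_{n',n} s.\<close>
inductive ttrace :: "('s, 'a) tts \<Rightarrow> ('s, 'a) tab \<Rightarrow> nat list \<Rightarrow> nat list \<Rightarrow> 's \<Rightarrow> 's \<Rightarrow> bool"
  for T t where
  refl: "ttrace T t n n s s"
| step: "ttrace T t n' (n @ [i]) s' s'' \<Longrightarrow> tstep T t n i s'' s \<Longrightarrow> ttrace T t n' n s' s"

lemma mono_tranclp_aux[mono]: "(\<And>a b. x a b \<longrightarrow> y a b) \<Longrightarrow> x\<^sup>+\<^sup>+ a b \<longrightarrow> y\<^sup>+\<^sup>+ a b"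
proof
  assume h: "\<And>a b. x a b \<longrightarrow> y a b" and "x\<^sup>+\<^sup>+ a b"
  from \<open>x\<^sup>+\<^sup>+ a b\<close> show "y\<^sup>+\<^sup>+ a b"
    by (induct rule: tranclp_induct) (use h in \<open>auto intro: tranclp.trancl_into_trancl\<close>)
qed

text \<open>cm T t m s' s: s' <:_m s;  ctr T t n' n s' s: s' <:_{n',n} s.\<close>
inductive cm :: "('s, 'a) tts \<Rightarrow> ('s, 'a) tab \<Rightarrow> nat list \<Rightarrow> 's \<Rightarrow> 's \<Rightarrow> bool"
  and ctr :: "('s, 'a) tts \<Rightarrow> ('s, 'a) tab \<Rightarrow> nat list \<Rightarrow> nat list \<Rightarrow> 's \<Rightarrow> 's \<Rightarrow> bool"
  for T t where
  cm_intro: "comp_node t m \<Longrightarrow> comp_leaf t m m' \<Longrightarrow> s' \<in> nS t m' \<Longrightarrow> ctr T t m' m s' s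
             \<Longrightarrow> cm T t m s' s"
| ctr_trace: "valid t n' \<Longrightarrow> valid t n \<Longrightarrow> s' \<in> nS t n' \<Longrightarrow> s \<in> nS t n \<Longrightarrow> ttrace T t n' n s' s
             \<Longrightarrow> ctr T t n' n s' s"
| ctr_comp: "valid t n' \<Longrightarrow> valid t n \<Longrightarrow> s' \<in> nS t n' \<Longrightarrow> s \<in> nS t n \<Longrightarrow>
             comp_node t m \<Longrightarrow> m \<noteq> n \<Longrightarrow> m \<noteq> n' \<Longrightarrow> u \<in> nS t m \<Longrightarrow> u' \<in> nS t m \<Longrightarrow>
             ctr T t n' m s' u' \<Longrightarrow> (cm T t m)\<^sup>+\<^sup>+ u' u \<Longrightarrow> ttrace T t m n u s
             \<Longrightarrow> ctr T t n' n s' s"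


definition successful_leaf :: "('s, 'a) tts \<Rightarrow> (nat \<Rightarrow> 's set) \<Rightarrow> ('s, 'a) tab \<Rightarrow> nat list \<Rightarrow> bool" where
  "successful_leaf T V t n \<longleftrightarrow>
     (\<exists>Z. nF t n = PVar Z \<and> Z \<notin> fst ` set (nD t n) \<and> nS t n \<subseteq> V Z) \<or>
     (\<exists>Z. nF t n = PNegVar Z \<and> Z \<notin> fst ` set (nD t n) \<and> nS t n \<inter> V Z = {}) \<or>
     (\<exists>U Z \<psi>. nF t n = PVar U \<and> map_of (nD t n) U = Some (PNu Z \<psi>)) \<comment> \<open>nu-leaf\<close> \<or>
     (\<exists>U Z \<psi>. nF t n = PVar U \<and> map_of (nD t n) U = Some (PMu Z \<psi>) \<and>
        (\<exists>m. comp_node t m \<and> comp_leaf t m n \<and> wfP (cm T t m)))  \<comment> \<open>mu-leaf\<close>"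

definition successful :: "('s, 'a) tts \<Rightarrow> (nat \<Rightarrow> 's set) \<Rightarrow> ('s, 'a) tab \<Rightarrow> bool" where
  "successful T V t \<longleftrightarrow> (\<forall>n. is_leaf t n \<longrightarrow> successful_leaf T V t n)"

end

theory Submission
  imports Defs
begin

text \<open>Signatures in the style of Streett and Emerson. Each \<open>\<mu>\<close>-definition is
  approximated transfinitely, and a state satisfying a sequent is given its signature: the
  lexicographically least tuple of approximation stages, one per definition, under which it
  satisfies the formula. The tableau is built top-down. At \<open>\<or>\<close>, \<open>\<langle>K\<rangle>\<close>, \<open>\<exists>\<close> and \<open>\<forall>\<close> nodes the
  witnesses are chosen so that the successor states satisfy the subformula under the current
  signature, and after every fixpoint rule the state set is thinned up to all states satisfying
  the new variable under some signature. Hence every repetition of a variable is a leaf whose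
  companion is the corresponding unfolding node, signatures never increase along the trace
  relations, and they strictly decrease when a \<open>\<mu>\<close>-definition is unfolded, so the relation
  \<open><:\<^sub>m\<close> of every \<open>\<mu>\<close>-companion is well-founded.\<close>

section \<open>Semantics of formulas in positive normal form\<close>

abbreviation psem :: "('s, 'a) tts \<Rightarrow> (nat \<Rightarrow> 's set) \<Rightarrow> 'a pform \<Rightarrow> 's set" where
  "psem T W \<phi> \<equiv> sem T W (to_core \<phi>)"

lemma sem_csubst_neg:
  "sem T W (csubst Y (CNeg (CVar Y)) c) = sem T (W(Y := - W Y)) c"
proof (induction c arbitrary: W)
  case (CNu X c)
  show ?case
  proof (cases "X = Y")
    case False
    then have "(W(X := S))(Y := - (W(X := S)) Y) = (W(Y := - W Y))(X := S)" for S
      by (auto simp: fun_eq_iff)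
    with False show ?thesis
      by (simp add: CNu.IH del: fun_upd_apply)
  qed (simp del: fun_upd_apply)
qed auto

lemma psem_PVar[simp]: "psem T W (PVar Z) = W Z" by simp
lemma psem_PNegVar[simp]: "psem T W (PNegVar Z) = - W Z" by simp
lemma psem_PAnd[simp]: "psem T W (PAnd \<phi> \<psi>) = psem T W \<phi> \<inter> psem T W \<psi>" by simp
lemma psem_POr[simp]: "psem T W (POr \<phi> \<psi>) = psem T W \<phi> \<union> psem T W \<psi>" by simp
lemma psem_PBox[simp]: "psem T W (PBox K \<phi>) = {s. \<forall>s'. ksucc T s K s' \<longrightarrow> s' \<in> psem T W \<phi>}" by simp
lemma psem_PDia[simp]: "psem T W (PDia K \<phi>) = {s. \<exists>s'. ksucc T s K s' \<and> s' \<in> psem T W \<phi>}" by auto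
lemma psem_PAll[simp]: "psem T W (PAll \<phi> \<psi>) =
     {s. \<forall>\<delta>\<in>delays T s. succ_lt T s \<delta> \<inter> psem T W \<phi> = {} \<longrightarrow> succ T s \<delta> \<in> psem T W \<psi>}" by simp
lemma psem_PEx[simp]: "psem T W (PEx \<phi> \<psi>) =
     {s. \<exists>\<delta>\<in>delays T s. succ_lt T s \<delta> \<subseteq> psem T W \<phi> \<and> succ T s \<delta> \<in> psem T W \<psi>}" by auto
lemma psem_PNu[simp]: "psem T W (PNu Z \<phi>) = gfp (\<lambda>X. psem T (W(Z := X)) \<phi>)"
  by (simp add: gfp_def Sup_set_def)

lemma psem_PMu[simp]: "psem T W (PMu Z \<phi>) = lfp (\<lambda>X. psem T (W(Z := X)) \<phi>)"
proof -
  have "psem T W (PMu Z \<phi>) = - \<Union>{X. X \<subseteq> - psem T (W(Z := - X)) \<phi>}"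
    by (simp add: sem_csubst_neg)
  also have "\<dots> = \<Inter>(uminus ` {X. X \<subseteq> - psem T (W(Z := - X)) \<phi>})"
    by (simp add: uminus_Sup)
  also have "uminus ` {X. X \<subseteq> - psem T (W(Z := - X)) \<phi>} = {X. psem T (W(Z := X)) \<phi> \<subseteq> X}"
    by (rule set_eqI) (simp add: image_iff, metis Compl_subset_Compl_iff double_compl)
  finally show ?thesis
    by (simp add: lfp_def)
qed

declare to_core.simps[simp del]

lemma psem_fun_upd_notin_fvars:
  "U \<notin> fvars \<phi> \<Longrightarrow> psem T (W(U := X)) \<phi> = psem T W \<phi>"
proof (induction \<phi> arbitrary: W)
  case (PNu Y \<phi>)
  then show ?case
    by (cases "Y = U") (simp_all add: fun_upd_twist[of U Y] del: fun_upd_apply)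
next
  case (PMu Y \<phi>)
  then show ?case
    by (cases "Y = U") (simp_all add: fun_upd_twist[of U Y] del: fun_upd_apply)
qed auto

lemma psem_psubst:
  "U \<notin> bvars \<phi> \<Longrightarrow> psem T W (psubst Z U \<phi>) = psem T (W(Z := W U)) \<phi>"
proof (induction \<phi> arbitrary: W)
  case (PNu Y \<phi>)
  then show ?case
    by (cases "Y = Z") (simp_all add: fun_upd_twist[of Z Y] fun_upd_other del: fun_upd_apply)
next
  case (PMu Y \<phi>)
  then show ?case
    by (cases "Y = Z") (simp_all add: fun_upd_twist[of Z Y] fun_upd_other del: fun_upd_apply)
qed auto

fun pos_fvars :: "'a pform \<Rightarrow> nat set" where
  "pos_fvars (PVar Z) = {Z}"
| "pos_fvars (PNegVar Z) = {}"
| "pos_fvars (PAnd \<phi> \<psi>) = pos_fvars \<phi> \<union> pos_fvars \<psi>"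
| "pos_fvars (POr \<phi> \<psi>) = pos_fvars \<phi> \<union> pos_fvars \<psi>"
| "pos_fvars (PBox K \<phi>) = pos_fvars \<phi>"
| "pos_fvars (PDia K \<phi>) = pos_fvars \<phi>"
| "pos_fvars (PAll \<phi> \<psi>) = pos_fvars \<phi> \<union> pos_fvars \<psi>"
| "pos_fvars (PEx \<phi> \<psi>) = pos_fvars \<phi> \<union> pos_fvars \<psi>"
| "pos_fvars (PNu Z \<phi>) = pos_fvars \<phi> - {Z}"
| "pos_fvars (PMu Z \<phi>) = pos_fvars \<phi> - {Z}"

fun neg_fvars :: "'a pform \<Rightarrow> nat set" where
  "neg_fvars (PVar Z) = {}"
| "neg_fvars (PNegVar Z) = {Z}"
| "neg_fvars (PAnd \<phi> \<psi>) = neg_fvars \<phi> \<union> neg_fvars \<psi>"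
| "neg_fvars (POr \<phi> \<psi>) = neg_fvars \<phi> \<union> neg_fvars \<psi>"
| "neg_fvars (PBox K \<phi>) = neg_fvars \<phi>"
| "neg_fvars (PDia K \<phi>) = neg_fvars \<phi>"
| "neg_fvars (PAll \<phi> \<psi>) = neg_fvars \<phi> \<union> neg_fvars \<psi>"
| "neg_fvars (PEx \<phi> \<psi>) = neg_fvars \<phi> \<union> neg_fvars \<psi>"
| "neg_fvars (PNu Z \<phi>) = neg_fvars \<phi> - {Z}"
| "neg_fvars (PMu Z \<phi>) = neg_fvars \<phi> - {Z}"

fun wf_pform :: "'a pform \<Rightarrow> bool" where
  "wf_pform (PVar Z) = True"
| "wf_pform (PNegVar Z) = True"
| "wf_pform (PAnd \<phi> \<psi>) = (wf_pform \<phi> \<and> wf_pform \<psi>)"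
| "wf_pform (POr \<phi> \<psi>) = (wf_pform \<phi> \<and> wf_pform \<psi>)"
| "wf_pform (PBox K \<phi>) = wf_pform \<phi>"
| "wf_pform (PDia K \<phi>) = wf_pform \<phi>"
| "wf_pform (PAll \<phi> \<psi>) = (wf_pform \<phi> \<and> wf_pform \<psi>)"
| "wf_pform (PEx \<phi> \<psi>) = (wf_pform \<phi> \<and> wf_pform \<psi>)"
| "wf_pform (PNu Z \<phi>) = (Z \<notin> neg_fvars \<phi> \<and> wf_pform \<phi>)"
| "wf_pform (PMu Z \<phi>) = (Z \<notin> neg_fvars \<phi> \<and> wf_pform \<phi>)"

lemma pos_neg_csubst_neg_other:
  "X \<noteq> Y \<Longrightarrow> (pos X (csubst Y (CNeg (CVar Y)) c) \<longleftrightarrow> pos X c) \<and>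
                 (neg X (csubst Y (CNeg (CVar Y)) c) \<longleftrightarrow> neg X c)"
  by (induction c) auto

lemma pos_neg_csubst_neg_same:
  "(neg Y (csubst Y (CNeg (CVar Y)) c) \<longleftrightarrow> pos Y c) \<and> (pos Y (csubst Y (CNeg (CVar Y)) c) \<longleftrightarrow> neg Y c)"
  by (induction c) auto

lemma wf_cform_csubst_neg: "wf_cform (csubst Y (CNeg (CVar Y)) c) = wf_cform c"
  by (induction c) (auto simp: pos_neg_csubst_neg_other)

lemma pos_neg_to_core:
  "(pos X (to_core \<phi>) \<longleftrightarrow> X \<notin> neg_fvars \<phi>) \<and> (neg X (to_core \<phi>) \<longleftrightarrow> X \<notin> pos_fvars \<phi>)"
proof (induction \<phi>)
  case (PMu Y \<phi>)
  then show ?case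
    by (cases "X = Y") (auto simp: to_core.simps pos_neg_csubst_neg_other)
qed (auto simp: to_core.simps)

lemma wf_cform_to_core: "wf_cform (to_core \<phi>) = wf_pform \<phi>"
  by (induction \<phi>)
    (auto simp: to_core.simps pos_neg_csubst_neg_same wf_cform_csubst_neg pos_neg_to_core)

lemma psem_fun_upd_mono_antimono:
  "X \<subseteq> Y \<Longrightarrow> (Z \<notin> neg_fvars \<phi> \<longrightarrow> psem T (W(Z := X)) \<phi> \<subseteq> psem T (W(Z := Y)) \<phi>) \<and>
                 (Z \<notin> pos_fvars \<phi> \<longrightarrow> psem T (W(Z := Y)) \<phi> \<subseteq> psem T (W(Z := X)) \<phi>)"
proof (induction \<phi> arbitrary: W)
  case (PNu Y' \<phi>)
  then show ?case
    by (cases "Y' = Z") (auto simp: fun_upd_twist[of Z Y'] simp del: fun_upd_apply intro!: gfp_mono)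
next
  case (PMu Y' \<phi>)
  then show ?case
    by (cases "Y' = Z") (auto simp: fun_upd_twist[of Z Y'] simp del: fun_upd_apply intro!: lfp_mono)
qed (simp; blast)+

lemma mono_psem: "Z \<notin> neg_fvars \<phi> \<Longrightarrow> mono (\<lambda>X. psem T (W(Z := X)) \<phi>)"
  using psem_fun_upd_mono_antimono by (metis monoI)

section \<open>Transfinite approximants of least fixpoints\<close>

text \<open>Approximation stages are indexed by state sets under an arbitrary well-order: by
  Cantor's theorem this index type is long enough for the approximants to exhaust the least
  fixpoint.\<close>

definition wo :: "('s set \<times> 's set) set" where
  "wo = (SOME r. Well_order r \<and> Field r = UNIV)"

definition wo_less :: "('s set \<times> 's set) set" where
  "wo_less = wo - Id"

lemma Well_order_wo: "Well_order (wo :: 's set rel) \<and> Field (wo :: 's set rel) = UNIV"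
  unfolding wo_def by (rule someI_ex[where P = "\<lambda>r. Well_order r \<and> Field r = UNIV", OF well_ordering])

lemma wf_wo_less: "wf wo_less"
  using Well_order_wo unfolding wo_less_def well_order_on_def by blast

lemma strict_linear_order_wo_less: "strict_linear_order_on UNIV (wo_less :: 's set rel)"
proof -
  have "Field (wo :: 's set rel) = UNIV" "linear_order_on (Field wo) (wo :: 's set rel)"
    using Well_order_wo unfolding well_order_on_def by blast+
  then have "linear_order_on UNIV (wo :: 's set rel)"
    by simp
  then show ?thesis
    unfolding wo_less_def by (rule strict_linear_order_on_diff_Id)
qed

definition approx :: "('s set \<Rightarrow> 's set) \<Rightarrow> 's set \<Rightarrow> 's set" where
  "approx F = wfrec wo_less (\<lambda>app \<alpha>. \<Union>\<beta>\<in>{\<beta>. (\<beta>, \<alpha>) \<in> wo_less}. F (app \<beta>))"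

lemma approx_eq: "approx F \<alpha> = (\<Union>\<beta>\<in>{\<beta>. (\<beta>, \<alpha>) \<in> wo_less}. F (approx F \<beta>))"
  unfolding approx_def by (subst wfrec[OF wf_wo_less]) (auto simp: cut_apply intro!: SUP_cong)

lemma wo_less_total: "\<alpha> \<noteq> \<beta> \<Longrightarrow> (\<alpha>, \<beta>) \<in> wo_less \<or> (\<beta>, \<alpha>) \<in> wo_less"
  using strict_linear_order_wo_less unfolding strict_linear_order_on_def total_on_def
  by (metis UNIV_I)

lemma approx_closed: "\<exists>\<alpha>. F (approx F \<alpha>) \<subseteq> approx F \<alpha>"
proof (rule ccontr)
  assume "\<nexists>\<alpha>. F (approx F \<alpha>) \<subseteq> approx F \<alpha>"
  then have "\<forall>\<alpha>. \<exists>x. x \<in> F (approx F \<alpha>) - approx F \<alpha>"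
    by (meson DiffI subsetI)
  then obtain e where e: "\<forall>\<alpha>. e \<alpha> \<in> F (approx F \<alpha>) - approx F \<alpha>"
    by (rule choice[THEN exE])
  have step: "F (approx F \<alpha>) \<subseteq> approx F \<beta>" if "(\<alpha>, \<beta>) \<in> wo_less" for \<alpha> \<beta>
    using that by (subst approx_eq[of F \<beta>]) (rule UN_upper, simp)
  have neq: "e \<alpha> \<noteq> e \<beta>" if "(\<alpha>, \<beta>) \<in> wo_less" for \<alpha> \<beta>
    using e step[OF that] by auto
  have "inj e"
    using neq wo_less_total by (metis injI)
  then have "surj (inv e)"
    by (rule inj_imp_surj_inv)
  then show False
    using Cantors_theorem[of UNIV] by (metis Pow_UNIV)
qed

lemma lfp_subset_approx: "\<exists>\<alpha>. lfp F \<subseteq> approx F \<alpha>"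
proof -
  obtain \<alpha> where "F (approx F \<alpha>) \<subseteq> approx F \<alpha>"
    using approx_closed by (rule exE)
  then have "lfp F \<subseteq> approx F \<alpha>"
    by (rule lfp_lowerbound)
  then show ?thesis ..
qed

section \<open>Signatures\<close>

lemma lex_take:
  "(xs, ys) \<in> lex r \<Longrightarrow> (take k xs, take k ys) \<in> (lex r)\<^sup>="
proof (induction xs arbitrary: ys k)
  case (Cons x xs)
  then obtain y ys' where ys: "ys = y # ys'"
    by (cases ys) auto
  show ?case
  proof (cases k)
    case (Suc k')
    have "(x, y) \<in> r \<and> length xs = length ys' \<or> x = y \<and> (xs, ys') \<in> lex r"
      using Cons.prems ys by simp
    then show ?thesis
    proof
      assume "(x, y) \<in> r \<and> length xs = length ys'"
      then show ?thesis using ys Suc by simp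
    next
      assume "x = y \<and> (xs, ys') \<in> lex r"
      then show ?thesis using Cons.IH[of ys' k'] ys Suc by auto
    qed
  qed simp
qed simp

abbreviation sig_less :: "'s set list \<Rightarrow> 's set list \<Rightarrow> bool" where
  "sig_less \<tau> \<tau>' \<equiv> (\<tau>, \<tau>') \<in> lex wo_less"

abbreviation sig_le :: "'s set list \<Rightarrow> 's set list \<Rightarrow> bool" where
  "sig_le \<tau> \<tau>' \<equiv> (\<tau>, \<tau>') \<in> (lex wo_less)\<^sup>="

lemma trans_sig_less: "trans (lex wo_less)"
  using strict_linear_order_wo_less lex_transI unfolding strict_linear_order_on_def by blast

lemma sig_le_trans: "sig_le \<tau>1 \<tau>2 \<Longrightarrow> sig_le \<tau>2 \<tau>3 \<Longrightarrow> sig_le \<tau>1 \<tau>3"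
  using trans_sig_less by (auto dest: transD)

lemma sig_le_less_trans: "sig_le \<tau>1 \<tau>2 \<Longrightarrow> sig_less \<tau>2 \<tau>3 \<Longrightarrow> sig_less \<tau>1 \<tau>3"
  using trans_sig_less by (auto dest: transD)

lemma sig_less_not_refl: "\<not> sig_less \<tau> \<tau>"
  by (meson lexl_not_refl strict_linear_order_on_def strict_linear_order_wo_less)

lemma sig_le_antisym: "sig_le \<tau> \<tau>' \<Longrightarrow> sig_le \<tau>' \<tau> \<Longrightarrow> \<tau> = \<tau>'"
  using sig_le_less_trans sig_less_not_refl by blast

lemma sig_less_linear:
  assumes "length \<tau> = length \<tau>'"
  shows "sig_le \<tau> \<tau>' \<or> sig_less \<tau>' \<tau>"
proof -
  have "\<forall>\<alpha> \<beta>. (\<alpha>, \<beta>) \<in> wo_less \<or> \<alpha> = \<beta> \<or> (\<beta>, \<alpha>) \<in> wo_less"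
    using wo_less_total by metis
  then have "(\<tau>, \<tau>') \<in> lexord wo_less \<or> \<tau> = \<tau>' \<or> (\<tau>', \<tau>) \<in> lexord wo_less"
    by (rule lexord_linear)
  with assms show ?thesis
    by (auto simp: lexord_lex)
qed

lemma sig_le_take: "sig_le \<tau> \<tau>' \<Longrightarrow> sig_le (take k \<tau>) (take k \<tau>')"
  using lex_take[of \<tau> \<tau>' wo_less k] by auto

lemma sig_less_snoc: "(\<alpha>, \<beta>) \<in> wo_less \<Longrightarrow> sig_less (\<tau> @ [\<alpha>]) (\<tau> @ [\<beta>])"
  by (rule lex_append_leftI) simp

text \<open>A signature assigns an approximation stage to each definition of a definition list;
  the stages of \<open>\<nu>\<close>-definitions are irrelevant.\<close>

fun def_val :: "('s, 'a) tts \<Rightarrow> (nat \<Rightarrow> 's set) \<Rightarrow> nat \<times> 'a pform \<Rightarrow> 's set \<Rightarrow> (nat \<Rightarrow> 's set)" where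
  "def_val T W (U, PNu Z \<psi>) \<alpha> = W(U := gfp (\<lambda>X. psem T (W(Z := X)) \<psi>))"
| "def_val T W (U, PMu Z \<psi>) \<alpha> = W(U := approx (\<lambda>X. psem T (W(Z := X)) \<psi>) \<alpha>)"
| "def_val T W (U, _) \<alpha> = W"

fun defs_val :: "('s, 'a) tts \<Rightarrow> (nat \<Rightarrow> 's set) \<Rightarrow> 'a deflist \<Rightarrow> 's set list \<Rightarrow> (nat \<Rightarrow> 's set)" where
  "defs_val T W (d # D) (\<alpha> # \<tau>) = defs_val T (def_val T W d \<alpha>) D \<tau>"
| "defs_val T W _ _ = W"

lemma def_val_other: "U \<noteq> fst d \<Longrightarrow> def_val T W d \<alpha> U = W U"
  by (cases "(T, W, d, \<alpha>)" rule: def_val.cases) auto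

lemma defs_val_notin: "U \<notin> fst ` set D \<Longrightarrow> defs_val T W D \<tau> U = W U"
  by (induction T W D \<tau> rule: defs_val.induct) (auto simp: def_val_other)

lemma defs_val_append:
  "length \<tau>1 = length D1 \<Longrightarrow>
   defs_val T W (D1 @ D2) (\<tau>1 @ \<tau>2) = defs_val T (defs_val T W D1 \<tau>1) D2 \<tau>2"
proof (induction D1 arbitrary: W \<tau>1)
  case (Cons d D1)
  then show ?case
    by (cases \<tau>1) auto
qed simp

definition sat :: "('s, 'a) tts \<Rightarrow> (nat \<Rightarrow> 's set) \<Rightarrow> 'a deflist \<Rightarrow> 'a pform \<Rightarrow> 's set list \<Rightarrow> 's \<Rightarrow> bool" where
  "sat T V D \<phi> \<tau> s \<longleftrightarrow> length \<tau> = length D \<and> s \<in> psem T (defs_val T V D \<tau>) \<phi>"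

definition sats :: "('s, 'a) tts \<Rightarrow> (nat \<Rightarrow> 's set) \<Rightarrow> 'a deflist \<Rightarrow> 'a pform \<Rightarrow> 's set" where
  "sats T V D \<phi> = {s. \<exists>\<tau>. sat T V D \<phi> \<tau> s}"

text \<open>Outside \<open>sats\<close> only the length of the signature matters.\<close>

definition sig :: "('s, 'a) tts \<Rightarrow> (nat \<Rightarrow> 's set) \<Rightarrow> 'a deflist \<Rightarrow> 'a pform \<Rightarrow> 's \<Rightarrow> 's set list" where
  "sig T V D \<phi> s = (if s \<in> sats T V D \<phi>
     then (SOME \<tau>. sat T V D \<phi> \<tau> s \<and> (\<forall>\<tau>'. sig_less \<tau>' \<tau> \<longrightarrow> \<not> sat T V D \<phi> \<tau>' s))
     else replicate (length D) undefined)"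

lemma sat_length: "sat T V D \<phi> \<tau> s \<Longrightarrow> length \<tau> = length D"
  unfolding sat_def by simp

lemma sig_minimal:
  assumes "sat T V D \<phi> \<tau> s"
  shows "sat T V D \<phi> (sig T V D \<phi> s) s \<and> (\<forall>\<tau>'. sig_less \<tau>' (sig T V D \<phi> s) \<longrightarrow> \<not> sat T V D \<phi> \<tau>' s)"
    (is "?P (sig T V D \<phi> s)")
proof -
  have "\<tau> \<in> {\<tau>. sat T V D \<phi> \<tau> s}"
    using assms by simp
  then obtain \<tau>m where "\<tau>m \<in> {\<tau>. sat T V D \<phi> \<tau> s}"
    and "\<And>\<tau>'. sig_less \<tau>' \<tau>m \<Longrightarrow> \<tau>' \<notin> {\<tau>. sat T V D \<phi> \<tau> s}"
    by (rule wfE_min[OF wf_lex[OF wf_wo_less]]) (rule that)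
  then have "?P \<tau>m"
    by blast
  then have some: "?P (SOME \<tau>. ?P \<tau>)"
    by (rule someI[where P = "?P"])
  have eq: "sig T V D \<phi> s = (SOME \<tau>. ?P \<tau>)"
    using assms unfolding sig_def sats_def by (intro if_P) blast
  show ?thesis
    unfolding eq by (rule some)
qed

lemma sig_sat: "sat T V D \<phi> \<tau> s \<Longrightarrow> sat T V D \<phi> (sig T V D \<phi> s) s"
  by (rule sig_minimal[THEN conjunct1])

lemma sig_le_sat:
  assumes "sat T V D \<phi> \<tau> s"
  shows "sig_le (sig T V D \<phi> s) \<tau>"
proof -
  have "length (sig T V D \<phi> s) = length \<tau>"
    using sig_sat[OF assms, THEN sat_length] sat_length[OF assms] by simp
  moreover have "\<not> sig_less \<tau> (sig T V D \<phi> s)"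
    using sig_minimal[OF assms] assms by blast
  ultimately show ?thesis
    using sig_less_linear by blast
qed

lemma sig_length[simp]: "length (sig T V D \<phi> s) = length D"
proof (cases "s \<in> sats T V D \<phi>")
  case True
  then obtain \<tau> where "sat T V D \<phi> \<tau> s"
    unfolding sats_def by blast
  then show ?thesis
    by (rule sig_sat[THEN sat_length])
qed (simp add: sig_def)

lemma sat_PVar_append:
  assumes "U \<in> fst ` set D1" "distinct (map fst (D1 @ D2))"
    and "length \<tau>1 = length D1" "length \<tau>2 = length D2"
  shows "sat T V (D1 @ D2) (PVar U) (\<tau>1 @ \<tau>2) s \<longleftrightarrow> sat T V D1 (PVar U) \<tau>1 s"
proof -
  have "U \<notin> fst ` set D2"
    using assms(1,2) by auto
  then show ?thesis
    using assms(3,4) unfolding sat_def by (simp add: defs_val_append defs_val_notin)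
qed

lemma sats_PVar_append:
  assumes "U \<in> fst ` set D1" "distinct (map fst (D1 @ D2))"
  shows "sats T V (D1 @ D2) (PVar U) = sats T V D1 (PVar U)"
proof (intro set_eqI iffI)
  fix s
  assume "s \<in> sats T V (D1 @ D2) (PVar U)"
  then obtain \<tau> where \<tau>: "sat T V (D1 @ D2) (PVar U) \<tau> s"
    unfolding sats_def by blast
  then have "sat T V D1 (PVar U) (take (length D1) \<tau>) s"
    using sat_PVar_append[OF assms, of "take (length D1) \<tau>" "drop (length D1) \<tau>"] sat_length
    by fastforce
  then show "s \<in> sats T V D1 (PVar U)"
    unfolding sats_def by blast
next
  fix s
  assume "s \<in> sats T V D1 (PVar U)"
  then obtain \<tau> where "sat T V D1 (PVar U) \<tau> s"
    unfolding sats_def by blast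
  then have "sat T V (D1 @ D2) (PVar U) (\<tau> @ replicate (length D2) undefined) s"
    using sat_PVar_append[OF assms] sat_length by fastforce
  then show "s \<in> sats T V (D1 @ D2) (PVar U)"
    unfolding sats_def by blast
qed

lemma take_sig_PVar_append:
  assumes "U \<in> fst ` set D1" "distinct (map fst (D1 @ D2))"
  shows "take (length D1) (sig T V (D1 @ D2) (PVar U) s) = sig T V D1 (PVar U) s"
proof (cases "s \<in> sats T V D1 (PVar U)")
  case True
  define \<sigma> where "\<sigma> = sig T V (D1 @ D2) (PVar U) s"
  define \<rho> where "\<rho> = sig T V D1 (PVar U) s"
  have \<sigma>: "sat T V (D1 @ D2) (PVar U) (take (length D1) \<sigma> @ drop (length D1) \<sigma>) s"
    using True sats_PVar_append[OF assms] sig_sat unfolding \<sigma>_def sats_def by fastforce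
  have \<rho>: "sat T V D1 (PVar U) \<rho> s"
    using True sig_sat unfolding \<rho>_def sats_def by fastforce
  have len: "length (take (length D1) \<sigma>) = length D1" "length (drop (length D1) \<sigma>) = length D2"
    unfolding \<sigma>_def by simp_all
  have "sat T V D1 (PVar U) (take (length D1) \<sigma>) s"
    using sat_PVar_append[OF assms len] \<sigma> by (rule iffD1)
  then have "sig_le \<rho> (take (length D1) \<sigma>)"
    unfolding \<rho>_def by (rule sig_le_sat)
  moreover have "sig_le (take (length D1) \<sigma>) \<rho>"
  proof -
    have "sat T V (D1 @ D2) (PVar U) (\<rho> @ drop (length D1) \<sigma>) s"
      using \<rho> sat_PVar_append[OF assms] sat_length unfolding \<sigma>_def by fastforce
    then have "sig_le \<sigma> (\<rho> @ drop (length D1) \<sigma>)"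
      unfolding \<sigma>_def by (rule sig_le_sat)
    then have "sig_le (take (length D1) \<sigma>) (take (length D1) (\<rho> @ drop (length D1) \<sigma>))"
      by (rule sig_le_take)
    then show ?thesis
      using sat_length[OF \<rho>] by simp
  qed
  ultimately show ?thesis
    unfolding \<sigma>_def \<rho>_def by (rule sig_le_antisym[symmetric])
next
  case False
  then have "s \<notin> sats T V (D1 @ D2) (PVar U)"
    by (simp add: sats_PVar_append[OF assms])
  with False show ?thesis
    unfolding sig_def by simp
qed

lemma size_psubst[simp]: "size (psubst Z U \<phi>) = size \<phi>"
  by (induction \<phi>) auto

lemma bvars_psubst[simp]: "bvars (psubst Z U \<phi>) = bvars \<phi>"
  by (induction \<phi>) auto

lemma finite_fvars[simp]: "finite (fvars \<phi>)"
  by (induction \<phi>) auto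

lemma finite_bvars[simp]: "finite (bvars \<phi>)"
  by (induction \<phi>) auto

lemma neg_fvars_subset_fvars: "neg_fvars \<phi> \<subseteq> fvars \<phi>"
  by (induction \<phi>) auto

lemma neg_fvars_psubst:
  "U \<notin> bvars \<phi> \<Longrightarrow>
   neg_fvars (psubst Z U \<phi>) = (neg_fvars \<phi> - {Z}) \<union> (if Z \<in> neg_fvars \<phi> then {U} else {})"
  by (induction \<phi>) auto

lemma wf_pform_psubst: "U \<notin> bvars \<phi> \<Longrightarrow> wf_pform \<phi> \<Longrightarrow> wf_pform (psubst Z U \<phi>)"
  by (induction \<phi>) (auto simp: neg_fvars_psubst)

lemma exists_fresh: "\<exists>U. fresh U D \<Phi>"
proof -
  let ?B = "fvars \<Phi> \<union> bvars \<Phi> \<union> fst ` set D \<union> (\<Union>d\<in>set D. fvars (snd d) \<union> bvars (snd d))"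
  have "\<exists>U. U \<notin> ?B"
    by (rule ex_new_if_finite[OF infinite_UNIV_nat]) simp
  then obtain U where "U \<notin> ?B" ..
  then have "fresh U D \<Phi>"
    unfolding fresh_def by simp
  then show ?thesis ..
qed

abbreviation is_fix :: "'a pform \<Rightarrow> nat \<Rightarrow> 'a pform \<Rightarrow> bool" where
  "is_fix \<Phi> Z \<psi> \<equiv> \<Phi> = PNu Z \<psi> \<or> \<Phi> = PMu Z \<psi>"

definition fixvar :: "'a deflist \<Rightarrow> 'a pform \<Rightarrow> nat" where
  "fixvar D \<Phi> = (SOME U. fresh U D \<Phi>)"

definition fixdefs :: "'a deflist \<Rightarrow> 'a pform \<Rightarrow> 'a deflist" where
  "fixdefs D \<Phi> = D @ [(fixvar D \<Phi>, \<Phi>)]"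

definition fixset :: "('s, 'a) tts \<Rightarrow> (nat \<Rightarrow> 's set) \<Rightarrow> 'a deflist \<Rightarrow> 'a pform \<Rightarrow> 's set" where
  "fixset T V D \<Phi> = sats T V (fixdefs D \<Phi>) (PVar (fixvar D \<Phi>))"

lemma fresh_fixvar: "fresh (fixvar D \<Phi>) D \<Phi>"
  unfolding fixvar_def using exists_fresh by (rule someI_ex)

lemma fixvar_notin_defs: "fixvar D \<Phi> \<notin> fst ` set D"
  using fresh_fixvar unfolding fresh_def by blast

lemma fixvar_fresh_body:
  assumes "is_fix \<Phi> Z \<psi>"
  shows "fixvar D \<Phi> \<notin> fvars \<psi>" "fixvar D \<Phi> \<notin> bvars \<psi>" "fixvar D \<Phi> \<noteq> Z"
proof -
  have "fvars \<Phi> = fvars \<psi> - {Z}" "bvars \<Phi> = insert Z (bvars \<psi>)"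
    using assms by auto
  then show "fixvar D \<Phi> \<notin> fvars \<psi>" "fixvar D \<Phi> \<notin> bvars \<psi>" "fixvar D \<Phi> \<noteq> Z"
    using fresh_fixvar[of D \<Phi>] unfolding fresh_def by auto
qed

lemma map_of_fixdefs: "map_of (fixdefs D \<Phi>) (fixvar D \<Phi>) = Some \<Phi>"
proof -
  have "map_of D (fixvar D \<Phi>) = None"
    using fixvar_notin_defs by (simp add: map_of_eq_None_iff)
  then show ?thesis
    unfolding fixdefs_def by (simp add: map_add_def)
qed

definition wf_seq :: "'a deflist \<Rightarrow> 'a pform \<Rightarrow> bool" where
  "wf_seq D \<Phi> \<longleftrightarrow> wf_deflist D \<and> wf_pform \<Phi> \<and>
     (\<forall>U\<in>fst ` set D. U \<notin> neg_fvars \<Phi> \<and> U \<notin> bvars \<Phi>) \<and>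
     (\<forall>(U, \<Psi>)\<in>set D. wf_pform \<Psi> \<and> (\<exists>Z \<psi>. is_fix \<Psi> Z \<psi>))"

definition true_seq :: "('s, 'a) tts \<Rightarrow> (nat \<Rightarrow> 's set) \<Rightarrow> 's set \<Rightarrow> 'a deflist \<Rightarrow> 'a pform \<Rightarrow> bool" where
  "true_seq T V S D \<Phi> \<longleftrightarrow> wf_seq D \<Phi> \<and> S \<subseteq> sats T V D \<Phi>"

lemma wf_seq_wf_sequent: "wf_seq D \<Phi> \<Longrightarrow> wf_sequent D \<Phi>"
  unfolding wf_seq_def wf_sequent_def using pos_neg_to_core by blast

lemma wf_deflist_snoc:
  assumes "wf_deflist D" "fresh U D \<Phi>" "\<forall>U'\<in>fst ` set D. U' \<notin> bvars \<Phi>"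
  shows "wf_deflist (D @ [(U, \<Phi>)])"
proof -
  let ?D = "D @ [(U, \<Phi>)]"
  have at: "?D ! i = (if i < length D then D ! i else (U, \<Phi>))" if "i < length ?D" for i
    using that by (simp add: nth_append)
  have old1: "fst (D ! i) \<notin> bvars (snd (D ! j))" if "i < length D" "j < length D" for i j
    using assms(1) that unfolding wf_deflist_def by blast
  have old2: "U \<notin> fvars (snd (D ! i)) \<union> bvars (snd (D ! i))" if "i < length D" for i
    using assms(2) nth_mem[OF that] unfolding fresh_def by blast
  have old3: "fst (D ! i) \<notin> bvars \<Phi>" if "i < length D" for i
    using assms(3) nth_mem[OF that] by blast
  have "distinct (map fst ?D)"
    using assms unfolding wf_deflist_def fresh_def by auto
  moreover have "fst (?D ! i) \<notin> bvars (snd (?D ! j))" if "i < length ?D" "j < length ?D" for i j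
    using at[OF that(1)] at[OF that(2)] old1[of i j] old2[of j] old3[of i] assms(2)
    unfolding fresh_def by (simp split: if_splits)
  moreover have "fst (?D ! j) \<notin> fvars (snd (?D ! i))" if "i \<le> j" "j < length ?D" for i j
  proof (cases "j < length D")
    case True
    then show ?thesis
      using assms(1) that unfolding wf_deflist_def by (simp add: nth_append)
  next
    case False
    then show ?thesis
      using at[of i] at[OF that(2)] old2[of i] assms(2) that unfolding fresh_def by (simp split: if_splits)
  qed
  ultimately show ?thesis
    unfolding wf_deflist_def by blast
qed

lemma wf_seq_fixdefs:
  assumes "wf_seq D \<Phi>" "is_fix \<Phi> Z \<psi>"
  shows "wf_seq (fixdefs D \<Phi>) (PVar (fixvar D \<Phi>))" "wf_seq (fixdefs D \<Phi>) (psubst Z (fixvar D \<Phi>) \<psi>)"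
proof -
  let ?U = "fixvar D \<Phi>"
  have defs: "wf_deflist (fixdefs D \<Phi>)"
    using assms(1) wf_deflist_snoc[OF _ fresh_fixvar] unfolding wf_seq_def fixdefs_def by blast
  have entries: "\<forall>(U, \<Psi>)\<in>set (fixdefs D \<Phi>). wf_pform \<Psi> \<and> (\<exists>Z \<psi>. is_fix \<Psi> Z \<psi>)"
    using assms unfolding wf_seq_def fixdefs_def by auto
  then show "wf_seq (fixdefs D \<Phi>) (PVar ?U)"
    using defs unfolding wf_seq_def by simp
  have body: "Z \<notin> neg_fvars \<psi>" "wf_pform \<psi>"
    using assms unfolding wf_seq_def by auto
  note fresh = fixvar_fresh_body[OF assms(2)]
  have "?U \<notin> neg_fvars \<psi>"
    using fresh(1) neg_fvars_subset_fvars by blast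
  moreover have "U \<notin> neg_fvars \<psi> \<and> U \<notin> bvars \<psi>" if "U \<in> fst ` set D" for U
    using assms that unfolding wf_seq_def by auto
  ultimately show "wf_seq (fixdefs D \<Phi>) (psubst Z ?U \<psi>)"
    using defs entries body fresh(2,3) unfolding wf_seq_def fixdefs_def
    by (auto simp: neg_fvars_psubst wf_pform_psubst)
qed

section \<open>Unfolding fixpoints along signatures\<close>

lemma defs_val_fixdefs:
  "length \<tau> = length D \<Longrightarrow>
   defs_val T V (fixdefs D \<Phi>) (\<tau> @ [\<alpha>]) = def_val T (defs_val T V D \<tau>) (fixvar D \<Phi>, \<Phi>) \<alpha>"
  unfolding fixdefs_def by (simp add: defs_val_append)

lemma sat_fixdefs_snoc:
  assumes "sat T V (fixdefs D \<Phi>) \<phi> \<tau> s"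
  obtains \<tau>0 \<alpha> where "\<tau> = \<tau>0 @ [\<alpha>]" "length \<tau>0 = length D"
proof -
  have "\<tau> \<noteq> []"
    using sat_length[OF assms] unfolding fixdefs_def by auto
  then obtain \<tau>0 \<alpha> where "\<tau> = \<tau>0 @ [\<alpha>]"
    by (cases \<tau> rule: rev_cases) auto
  moreover have "length \<tau>0 = length D"
    using sat_length[OF assms] unfolding calculation fixdefs_def by simp
  ultimately show ?thesis
    by (rule that)
qed

lemma psem_psubst_fixvar:
  assumes "is_fix \<Phi> Z \<psi>"
  shows "psem T (W(fixvar D \<Phi> := X)) (psubst Z (fixvar D \<Phi>) \<psi>) = psem T (W(Z := X)) \<psi>"
proof -
  let ?U = "fixvar D \<Phi>"
  note fresh = fixvar_fresh_body[OF assms]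
  have "psem T (W(?U := X)) (psubst Z ?U \<psi>) = psem T (W(?U := X, Z := X)) \<psi>"
    using psem_psubst[OF fresh(2), of T "W(?U := X)" Z] by simp
  also have "\<dots> = psem T ((W(Z := X))(?U := X)) \<psi>"
    using fresh(3) by (simp add: fun_upd_twist)
  also have "\<dots> = psem T (W(Z := X)) \<psi>"
    by (rule psem_fun_upd_notin_fvars[OF fresh(1)])
  finally show ?thesis .
qed

lemma sat_fixdefs:
  assumes "is_fix \<Phi> Z \<psi>" "sat T V D \<Phi> \<tau> s"
  shows "\<exists>\<alpha>. sat T V (fixdefs D \<Phi>) (PVar (fixvar D \<Phi>)) (\<tau> @ [\<alpha>]) s"
proof -
  let ?W = "defs_val T V D \<tau>"
  have len: "length \<tau> = length D"
    using assms(2) by (rule sat_length)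
  note val = defs_val_fixdefs[OF len]
  have s: "s \<in> psem T ?W \<Phi>"
    using assms(2) unfolding sat_def by simp
  from assms(1) show ?thesis
  proof
    assume "\<Phi> = PNu Z \<psi>"
    then show ?thesis
      using s len unfolding sat_def val by (simp add: fixdefs_def)
  next
    assume \<Phi>: "\<Phi> = PMu Z \<psi>"
    obtain \<alpha> where "lfp (\<lambda>X. psem T (?W(Z := X)) \<psi>) \<subseteq> approx (\<lambda>X. psem T (?W(Z := X)) \<psi>) \<alpha>"
      using lfp_subset_approx[of "\<lambda>X. psem T (?W(Z := X)) \<psi>"] ..
    moreover have "defs_val T V (fixdefs D \<Phi>) (\<tau> @ [\<alpha>]) (fixvar D \<Phi>)
        = approx (\<lambda>X. psem T (?W(Z := X)) \<psi>) \<alpha>"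
      unfolding val by (simp add: \<Phi>)
    ultimately have "sat T V (fixdefs D \<Phi>) (PVar (fixvar D \<Phi>)) (\<tau> @ [\<alpha>]) s"
      using s len unfolding sat_def \<Phi> by (auto simp: fixdefs_def)
    then show ?thesis ..
  qed
qed

lemma sat_unfold_nu:
  assumes "wf_seq D \<Phi>" "\<Phi> = PNu Z \<psi>"
    and s: "sat T V (fixdefs D \<Phi>) (PVar (fixvar D \<Phi>)) \<tau> s"
  shows "sat T V (fixdefs D \<Phi>) (psubst Z (fixvar D \<Phi>) \<psi>) \<tau> s"
proof -
  obtain \<tau>0 \<alpha> where \<tau>: "\<tau> = \<tau>0 @ [\<alpha>]" and len: "length \<tau>0 = length D"
    using s by (rule sat_fixdefs_snoc)
  define W where "W = defs_val T V D \<tau>0"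
  define F where "F = (\<lambda>X. psem T (W(Z := X)) \<psi>)"
  have v: "defs_val T V (fixdefs D \<Phi>) \<tau> = W(fixvar D \<Phi> := gfp F)"
    unfolding \<tau> defs_val_fixdefs[OF len] W_def F_def by (simp add: assms(2))
  have "Z \<notin> neg_fvars \<psi>"
    using assms(1,2) unfolding wf_seq_def by simp
  then have "gfp F = F (gfp F)"
    unfolding F_def by (intro gfp_unfold mono_psem)
  moreover have "is_fix \<Phi> Z \<psi>"
    using assms(2) by simp
  ultimately show ?thesis
    using s unfolding sat_def v by (simp add: psem_psubst_fixvar F_def)
qed

text \<open>This strict decrease is what makes the companion relation of a \<open>\<mu>\<close>-leaf well-founded.\<close>

lemma sat_unfold_mu:
  assumes "\<Phi> = PMu Z \<psi>"
    and s: "sat T V (fixdefs D \<Phi>) (PVar (fixvar D \<Phi>)) \<tau> s"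
  shows "\<exists>\<tau>'. sat T V (fixdefs D \<Phi>) (psubst Z (fixvar D \<Phi>) \<psi>) \<tau>' s \<and> sig_less \<tau>' \<tau>"
proof -
  obtain \<tau>0 \<alpha> where \<tau>: "\<tau> = \<tau>0 @ [\<alpha>]" and len: "length \<tau>0 = length D"
    using s by (rule sat_fixdefs_snoc)
  define W where "W = defs_val T V D \<tau>0"
  define F where "F = (\<lambda>X. psem T (W(Z := X)) \<psi>)"
  have v: "defs_val T V (fixdefs D \<Phi>) (\<tau>0 @ [\<beta>]) = W(fixvar D \<Phi> := approx F \<beta>)" for \<beta>
    unfolding defs_val_fixdefs[OF len] W_def F_def by (simp add: assms(1))
  have "s \<in> approx F \<alpha>"
    using s unfolding sat_def \<tau> v by simp
  then have "s \<in> (\<Union>\<beta>\<in>{\<beta>. (\<beta>, \<alpha>) \<in> wo_less}. F (approx F \<beta>))"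
    unfolding approx_eq[of F \<alpha>] .
  then obtain \<beta> where \<beta>: "(\<beta>, \<alpha>) \<in> wo_less" "s \<in> F (approx F \<beta>)"
    by blast
  moreover have "is_fix \<Phi> Z \<psi>"
    using assms(1) by simp
  ultimately have "sat T V (fixdefs D \<Phi>) (psubst Z (fixvar D \<Phi>) \<psi>) (\<tau>0 @ [\<beta>]) s"
    using len unfolding sat_def v by (simp add: psem_psubst_fixvar F_def fixdefs_def)
  moreover have "sig_less (\<tau>0 @ [\<beta>]) \<tau>"
    unfolding \<tau> using \<beta>(1) by (rule sig_less_snoc)
  ultimately show ?thesis
    by blast
qed

lemma sat_unfold:
  assumes "wf_seq D \<Phi>" "is_fix \<Phi> Z \<psi>"
    and s: "sat T V (fixdefs D \<Phi>) (PVar (fixvar D \<Phi>)) \<tau> s"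
  shows "\<exists>\<tau>'. sat T V (fixdefs D \<Phi>) (psubst Z (fixvar D \<Phi>) \<psi>) \<tau>' s \<and> sig_le \<tau>' \<tau> \<and>
           (\<Phi> = PMu Z \<psi> \<longrightarrow> sig_less \<tau>' \<tau>)"
  using assms(2)
proof
  assume "\<Phi> = PNu Z \<psi>"
  then show ?thesis
    using sat_unfold_nu[OF assms(1) _ s] by auto
next
  assume "\<Phi> = PMu Z \<psi>"
  then show ?thesis
    using sat_unfold_mu[OF _ s] by auto
qed

section \<open>Construction of the tableau\<close>

definition or_left :: "('s, 'a) tts \<Rightarrow> (nat \<Rightarrow> 's set) \<Rightarrow> 's set \<Rightarrow> 'a deflist \<Rightarrow> 'a pform \<Rightarrow> 'a pform \<Rightarrow> 's set" where
  "or_left T V S D \<phi> \<psi> = {s \<in> S. sat T V D \<phi> (sig T V D (POr \<phi> \<psi>) s) s}"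

definition dia_witness :: "('s, 'a) tts \<Rightarrow> (nat \<Rightarrow> 's set) \<Rightarrow> 'a deflist \<Rightarrow> 'a set \<Rightarrow> 'a pform \<Rightarrow> 's \<Rightarrow> 's" where
  "dia_witness T V D K \<psi> s = (SOME s'. ksucc T s K s' \<and> sat T V D \<psi> (sig T V D (PDia K \<psi>) s) s')"

definition ex_witness :: "('s, 'a) tts \<Rightarrow> (nat \<Rightarrow> 's set) \<Rightarrow> 'a deflist \<Rightarrow> 'a pform \<Rightarrow> 'a pform \<Rightarrow> 's \<Rightarrow> real" where
  "ex_witness T V D \<phi> \<psi> s = (SOME \<delta>. \<delta> \<in> delays T s \<and>
      (\<forall>s'\<in>succ_lt T s \<delta>. sat T V D \<phi> (sig T V D (PEx \<phi> \<psi>) s) s') \<and>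
      sat T V D \<psi> (sig T V D (PEx \<phi> \<psi>) s) (succ T s \<delta>))"

definition all_witness :: "('s, 'a) tts \<Rightarrow> (nat \<Rightarrow> 's set) \<Rightarrow> 'a deflist \<Rightarrow> 'a pform \<Rightarrow> 'a pform \<Rightarrow> 's \<Rightarrow> real \<Rightarrow> real" where
  "all_witness T V D \<phi> \<psi> s \<delta> =
     (let P = \<lambda>\<delta>'. 0 \<le> \<delta>' \<and> \<delta>' < \<delta> \<and> (\<exists>s'. tr T s (dly T \<delta>') s' \<and> sat T V D \<phi> (sig T V D (PAll \<phi> \<psi>) s) s')
      in if Ex P then Eps P else \<delta>)"

definition succs_lt :: "('s, 'a) tts \<Rightarrow> 's set \<Rightarrow> ('s \<Rightarrow> real \<Rightarrow> real) \<Rightarrow> 's set" where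
  "succs_lt T S g = {succ T s (g s \<delta>) | s \<delta>. s \<in> S \<and> \<delta> \<in> delays T s \<and> g s \<delta> < \<delta>}"

definition succs_eq :: "('s, 'a) tts \<Rightarrow> 's set \<Rightarrow> ('s \<Rightarrow> real \<Rightarrow> real) \<Rightarrow> 's set" where
  "succs_eq T S g = {succ T s (g s \<delta>) | s \<delta>. s \<in> S \<and> \<delta> \<in> delays T s \<and> g s \<delta> = \<delta>}"

text \<open>A fixpoint formula is expanded into three nodes: the fixpoint rule introduces the
  variable \<open>U\<close>, thinning enlarges the state set to all states satisfying \<open>U\<close> under some signature,
  and the unfolding node is then the companion of every later occurrence of \<open>U\<close>, which is
  therefore a leaf.\<close>

definition unfold_node :: "('s, 'a) tts \<Rightarrow> (nat \<Rightarrow> 's set) \<Rightarrow> 'a deflist \<Rightarrow> 'a pform \<Rightarrow> ('s, 'a) tab \<Rightarrow> ('s, 'a) tab" where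
  "unfold_node T V D \<Phi> c = TNode (fixset T V D \<Phi>) (fixdefs D \<Phi>) (PVar (fixvar D \<Phi>)) (Some R_Un) [c]"

definition thin_node :: "('s, 'a) tts \<Rightarrow> (nat \<Rightarrow> 's set) \<Rightarrow> 's set \<Rightarrow> 'a deflist \<Rightarrow> 'a pform \<Rightarrow> ('s, 'a) tab \<Rightarrow> ('s, 'a) tab" where
  "thin_node T V S D \<Phi> c = TNode S (fixdefs D \<Phi>) (PVar (fixvar D \<Phi>)) (Some R_Thin) [unfold_node T V D \<Phi> c]"

function build :: "('s, 'a) tts \<Rightarrow> (nat \<Rightarrow> 's set) \<Rightarrow> 's set \<Rightarrow> 'a deflist \<Rightarrow> 'a pform \<Rightarrow> ('s, 'a) tab" where
  "build T V S D (PVar Z) = TNode S D (PVar Z) None []"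
| "build T V S D (PNegVar Z) = TNode S D (PNegVar Z) None []"
| "build T V S D (PAnd \<phi> \<psi>) = TNode S D (PAnd \<phi> \<psi>) (Some R_And) [build T V S D \<phi>, build T V S D \<psi>]"
| "build T V S D (POr \<phi> \<psi>) = TNode S D (POr \<phi> \<psi>) (Some R_Or)
     [build T V (or_left T V S D \<phi> \<psi>) D \<phi>, build T V (S - or_left T V S D \<phi> \<psi>) D \<psi>]"
| "build T V S D (PBox K \<psi>) = TNode S D (PBox K \<psi>) (Some R_Box)
     [build T V {s'. \<exists>s\<in>S. ksucc T s K s'} D \<psi>]"
| "build T V S D (PDia K \<psi>) = TNode S D (PDia K \<psi>) (Some (R_Dia (dia_witness T V D K \<psi>)))
     [build T V (dia_witness T V D K \<psi> ` S) D \<psi>]"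
| "build T V S D (PAll \<phi> \<psi>) = TNode S D (PAll \<phi> \<psi>) (Some (R_All (all_witness T V D \<phi> \<psi>)))
     [build T V (succs_lt T S (all_witness T V D \<phi> \<psi>)) D \<phi>,
      build T V (succs_eq T S (all_witness T V D \<phi> \<psi>)) D \<psi>]"
| "build T V S D (PEx \<phi> \<psi>) = TNode S D (PEx \<phi> \<psi>) (Some (R_Ex (ex_witness T V D \<phi> \<psi>)))
     [build T V (\<Union>s\<in>S. succ_lt T s (ex_witness T V D \<phi> \<psi> s)) D \<phi>,
      build T V ((\<lambda>s. succ T s (ex_witness T V D \<phi> \<psi> s)) ` S) D \<psi>]"
| "build T V S D (PNu Z \<psi>) = TNode S D (PNu Z \<psi>) (Some R_Fix)
     [thin_node T V S D (PNu Z \<psi>)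
       (build T V (fixset T V D (PNu Z \<psi>)) (fixdefs D (PNu Z \<psi>)) (psubst Z (fixvar D (PNu Z \<psi>)) \<psi>))]"
| "build T V S D (PMu Z \<psi>) = TNode S D (PMu Z \<psi>) (Some R_Fix)
     [thin_node T V S D (PMu Z \<psi>)
       (build T V (fixset T V D (PMu Z \<psi>)) (fixdefs D (PMu Z \<psi>)) (psubst Z (fixvar D (PMu Z \<psi>)) \<psi>))]"
  by pat_completeness auto
termination
  by (relation "measure (\<lambda>(T, V, S, D, \<Phi>). size \<Phi>)") auto

definition unfold_child :: "('s, 'a) tts \<Rightarrow> (nat \<Rightarrow> 's set) \<Rightarrow> 'a deflist \<Rightarrow> 'a pform \<Rightarrow> nat \<Rightarrow> 'a pform \<Rightarrow> ('s, 'a) tab" where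
  "unfold_child T V D \<Phi> Z \<psi> = build T V (fixset T V D \<Phi>) (fixdefs D \<Phi>) (psubst Z (fixvar D \<Phi>) \<psi>)"

lemma build_fix:
  "is_fix \<Phi> Z \<psi> \<Longrightarrow>
   build T V S D \<Phi> = TNode S D \<Phi> (Some R_Fix) [thin_node T V S D \<Phi> (unfold_child T V D \<Phi> Z \<psi>)]"
  unfolding unfold_child_def by auto

lemma build_root[simp]:
  "tS (build T V S D \<Phi>) = S" "tD (build T V S D \<Phi>) = D" "tF (build T V S D \<Phi>) = \<Phi>"
  by (cases \<Phi>; simp)+

lemma seq_of_build[simp]: "seq_of (build T V S D \<Phi>) = (S, D, \<Phi>)"
  unfolding seq_of_def by simp

lemma tR_build[simp]: "tR (build T V S D \<Phi>) \<noteq> Some R_Un" "tR (build T V S D \<Phi>) \<noteq> Some R_Thin"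
  by (cases \<Phi>; simp)+

lemma dia_witness_spec:
  assumes "sat T V D (PDia K \<psi>) \<tau> s"
  shows "ksucc T s K (dia_witness T V D K \<psi> s) \<and>
         sat T V D \<psi> (sig T V D (PDia K \<psi>) s) (dia_witness T V D K \<psi> s)"
proof -
  have "\<exists>s'. ksucc T s K s' \<and> sat T V D \<psi> (sig T V D (PDia K \<psi>) s) s'"
    using sig_sat[OF assms] unfolding sat_def by auto
  then show ?thesis
    unfolding dia_witness_def by (rule someI_ex)
qed

lemma ex_witness_spec:
  assumes "sat T V D (PEx \<phi> \<psi>) \<tau> s"
  shows "ex_witness T V D \<phi> \<psi> s \<in> delays T s \<and>
      (\<forall>s'\<in>succ_lt T s (ex_witness T V D \<phi> \<psi> s). sat T V D \<phi> (sig T V D (PEx \<phi> \<psi>) s) s') \<and>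
      sat T V D \<psi> (sig T V D (PEx \<phi> \<psi>) s) (succ T s (ex_witness T V D \<phi> \<psi> s))"
proof -
  have "\<exists>\<delta>. \<delta> \<in> delays T s \<and> (\<forall>s'\<in>succ_lt T s \<delta>. sat T V D \<phi> (sig T V D (PEx \<phi> \<psi>) s) s') \<and>
      sat T V D \<psi> (sig T V D (PEx \<phi> \<psi>) s) (succ T s \<delta>)"
    using sig_sat[OF assms] unfolding sat_def by auto
  then show ?thesis
    unfolding ex_witness_def by (rule someI_ex)
qed

lemma succ_eq:
  assumes "is_TTS T" "0 \<le> \<delta>" "tr T s (dly T \<delta>) s'"
  shows "succ T s \<delta> = s'"
  unfolding succ_def
proof (rule the_equality)
  show "s'' = s'" if "tr T s (dly T \<delta>) s''" for s''
    using assms that unfolding is_TTS_def by blast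
qed (rule assms(3))

lemma all_witness_spec:
  assumes "is_TTS T" "sat T V D (PAll \<phi> \<psi>) \<tau> s" "\<delta> \<in> delays T s"
  defines "g \<equiv> all_witness T V D \<phi> \<psi> s \<delta>"
  shows "0 \<le> g \<and> g \<le> \<delta> \<and>
    (g < \<delta> \<longrightarrow> sat T V D \<phi> (sig T V D (PAll \<phi> \<psi>) s) (succ T s g)) \<and>
    (g = \<delta> \<longrightarrow> sat T V D \<psi> (sig T V D (PAll \<phi> \<psi>) s) (succ T s \<delta>))"
proof -
  define P where "P = (\<lambda>\<delta>'. 0 \<le> \<delta>' \<and> \<delta>' < \<delta> \<and>
      (\<exists>s'. tr T s (dly T \<delta>') s' \<and> sat T V D \<phi> (sig T V D (PAll \<phi> \<psi>) s) s'))"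
  have g: "g = (if Ex P then Eps P else \<delta>)"
    unfolding g_def all_witness_def P_def Let_def ..
  show ?thesis
  proof (cases "Ex P")
    case True
    then have "P g"
      unfolding g by (simp add: someI_ex)
    then obtain s' where "0 \<le> g" "g < \<delta>" "tr T s (dly T g) s'"
      and "sat T V D \<phi> (sig T V D (PAll \<phi> \<psi>) s) s'"
      unfolding P_def by blast
    with succ_eq[OF assms(1)] show ?thesis
      by auto
  next
    case False
    then have "\<forall>s'\<in>succ_lt T s \<delta>. \<not> sat T V D \<phi> (sig T V D (PAll \<phi> \<psi>) s) s'"
      unfolding succ_lt_def P_def by blast
    then have "sat T V D \<psi> (sig T V D (PAll \<phi> \<psi>) s) (succ T s \<delta>)"
      using sig_sat[OF assms(2)] assms(3) unfolding sat_def by auto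
    moreover have "g = \<delta>"
      unfolding g using False by (rule if_not_P)
    ultimately show ?thesis
      using assms(3) unfolding delays_def by simp
  qed
qed

inductive constructed :: "('s, 'a) tts \<Rightarrow> (nat \<Rightarrow> 's set) \<Rightarrow> ('s, 'a) tab \<Rightarrow> bool" for T V where
  build: "true_seq T V S D \<Phi> \<Longrightarrow> constructed T V (build T V S D \<Phi>)"
| thin: "true_seq T V S D \<Phi> \<Longrightarrow> is_fix \<Phi> Z \<psi> \<Longrightarrow>
         constructed T V (thin_node T V S D \<Phi> (unfold_child T V D \<Phi> Z \<psi>))"
| unfold: "wf_seq D \<Phi> \<Longrightarrow> is_fix \<Phi> Z \<psi> \<Longrightarrow>
         constructed T V (unfold_node T V D \<Phi> (unfold_child T V D \<Phi> Z \<psi>))"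

definition node_step :: "('s, 'a) tts \<Rightarrow> ('s, 'a) tab \<Rightarrow> nat \<Rightarrow> 's \<Rightarrow> 's \<Rightarrow> bool" where
  "node_step T n i s' s \<longleftrightarrow>
     (case tR n of
        Some R_Box \<Rightarrow> ksucc T s (boxK (tF n)) s'
      | Some (R_Dia f) \<Rightarrow> s' = f s
      | Some (R_Ex f) \<Rightarrow> (if i = 0 then s' \<in> succ_lt T s (f s) else s' = succ T s (f s))
      | Some (R_All g) \<Rightarrow> (\<exists>\<delta>\<in>delays T s. s' = succ T s (g s \<delta>) \<and>
                             (if i = 0 then g s \<delta> < \<delta> else g s \<delta> = \<delta>))
      | _ \<Rightarrow> s' = s)"

lemma true_seq_sat: "true_seq T V S D \<Phi> \<Longrightarrow> s \<in> S \<Longrightarrow> sat T V D \<Phi> (sig T V D \<Phi> s) s"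
  unfolding true_seq_def sats_def by (blast intro: sig_sat)

lemma build_child_origin:
  assumes "i < length (tC (build T V S D \<Phi>))" "s' \<in> tS (tC (build T V S D \<Phi>) ! i)"
  shows "\<exists>s\<in>S. node_step T (build T V S D \<Phi>) i s' s"
  using assms
  by (cases \<Phi>; fastforce simp: node_step_def or_left_def succs_lt_def succs_eq_def thin_node_def
      less_Suc_eq)

lemma build_child_sat:
  assumes "is_TTS T" "true_seq T V S D \<Phi>" "\<nexists>Z \<psi>. is_fix \<Phi> Z \<psi>"
    and i: "i < length (tC (build T V S D \<Phi>))" and "s \<in> S"
    and s': "s' \<in> tS (tC (build T V S D \<Phi>) ! i)" and step: "node_step T (build T V S D \<Phi>) i s' s"
  shows "sat T V D (tF (tC (build T V S D \<Phi>) ! i)) (sig T V D \<Phi> s) s'"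
proof -
  have st: "sat T V D \<Phi> (sig T V D \<Phi> s) s"
    using assms(2,5) by (rule true_seq_sat)
  show ?thesis
  proof (cases \<Phi>)
    case (PAnd \<phi> \<psi>)
    then show ?thesis
      using st i step by (auto simp: sat_def node_step_def less_Suc_eq)
  next
    case (POr \<phi> \<psi>)
    then show ?thesis
      using st i s' step \<open>s \<in> S\<close> by (auto simp: sat_def node_step_def or_left_def less_Suc_eq)
  next
    case (PBox K \<psi>)
    then show ?thesis
      using st i step by (auto simp: sat_def node_step_def)
  next
    case (PDia K \<psi>)
    then show ?thesis
      using dia_witness_spec[of T V D K \<psi>] st i step by (auto simp: node_step_def)
  next
    case (PAll \<phi> \<psi>)
    then show ?thesis
      using all_witness_spec[OF assms(1), of V D \<phi> \<psi>] st i step by (auto simp: node_step_def less_Suc_eq)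
  next
    case (PEx \<phi> \<psi>)
    then show ?thesis
      using ex_witness_spec[of T V D \<phi> \<psi>] st i step by (auto simp: node_step_def less_Suc_eq)
  qed (use assms(3) i in auto)
qed

lemma build_child_build:
  assumes "c \<in> set (tC (build T V S D \<Phi>))" "\<nexists>Z \<psi>. is_fix \<Phi> Z \<psi>" "wf_seq D \<Phi>"
  shows "\<exists>S' \<phi>. c = build T V S' D \<phi> \<and> wf_seq D \<phi>"
  using assms by (cases \<Phi>) (auto simp: wf_seq_def)

lemma true_seq_build_child:
  assumes "is_TTS T" "true_seq T V S D \<Phi>" "\<nexists>Z \<psi>. is_fix \<Phi> Z \<psi>" "c \<in> set (tC (build T V S D \<Phi>))"
  shows "true_seq T V (tS c) D (tF c)"
proof -
  obtain i where i: "i < length (tC (build T V S D \<Phi>))" and c: "c = tC (build T V S D \<Phi>) ! i"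
    using assms(4) by (metis in_set_conv_nth)
  have "tS c \<subseteq> sats T V D (tF c)"
  proof
    fix s'
    assume s': "s' \<in> tS c"
    then obtain s where "s \<in> S" "node_step T (build T V S D \<Phi>) i s' s"
      using build_child_origin[OF i] unfolding c by blast
    then have "sat T V D (tF c) (sig T V D \<Phi> s) s'"
      using build_child_sat[OF assms(1-3) i] s' unfolding c by simp
    then show "s' \<in> sats T V D (tF c)"
      unfolding sats_def mem_Collect_eq by (rule exI)
  qed
  moreover have "wf_seq D (tF c)"
    using build_child_build[OF assms(4,3)] assms(2) unfolding true_seq_def by auto
  ultimately show ?thesis
    unfolding true_seq_def by blast
qed

lemma fixset_subset_sats_unfold:
  assumes "wf_seq D \<Phi>" "is_fix \<Phi> Z \<psi>"
  shows "fixset T V D \<Phi> \<subseteq> sats T V (fixdefs D \<Phi>) (psubst Z (fixvar D \<Phi>) \<psi>)"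
proof
  fix s
  assume "s \<in> fixset T V D \<Phi>"
  then obtain \<tau> where "sat T V (fixdefs D \<Phi>) (PVar (fixvar D \<Phi>)) \<tau> s"
    unfolding fixset_def sats_def by blast
  from sat_unfold[OF assms this]
  obtain \<tau>' where "sat T V (fixdefs D \<Phi>) (psubst Z (fixvar D \<Phi>) \<psi>) \<tau>' s"
    by blast
  then show "s \<in> sats T V (fixdefs D \<Phi>) (psubst Z (fixvar D \<Phi>) \<psi>)"
    unfolding sats_def mem_Collect_eq by (rule exI)
qed

lemma subset_fixset:
  assumes "true_seq T V S D \<Phi>" "is_fix \<Phi> Z \<psi>"
  shows "S \<subseteq> fixset T V D \<Phi>"
proof
  fix s
  assume "s \<in> S"
  then have "sat T V D \<Phi> (sig T V D \<Phi> s) s"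
    using assms(1) by (rule true_seq_sat[rotated])
  from sat_fixdefs[OF assms(2) this]
  obtain \<alpha> where "sat T V (fixdefs D \<Phi>) (PVar (fixvar D \<Phi>)) (sig T V D \<Phi> s @ [\<alpha>]) s" ..
  then show "s \<in> fixset T V D \<Phi>"
    unfolding fixset_def sats_def mem_Collect_eq by (rule exI)
qed

lemma constructed_build_child:
  assumes "is_TTS T" "true_seq T V S D \<Phi>" "c \<in> set (tC (build T V S D \<Phi>))"
  shows "constructed T V c"
proof (cases "\<exists>Z \<psi>. is_fix \<Phi> Z \<psi>")
  case True
  then obtain Z \<psi> where fx: "is_fix \<Phi> Z \<psi>"
    by blast
  then have "c = thin_node T V S D \<Phi> (unfold_child T V D \<Phi> Z \<psi>)"
    using assms(3) by (simp add: build_fix[OF fx])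
  then show ?thesis
    using constructed.thin[OF assms(2) fx] by simp
next
  case False
  have "wf_seq D \<Phi>"
    using assms(2) unfolding true_seq_def by blast
  then obtain S' \<phi> where c: "c = build T V S' D \<phi>"
    using build_child_build[of c T V S D \<Phi>] False assms(3) by blast
  have "true_seq T V (tS c) D (tF c)"
    using true_seq_build_child[OF assms(1,2) False] assms(3) by simp
  then have "true_seq T V S' D \<phi>"
    unfolding c by simp
  then show ?thesis
    unfolding c by (rule constructed.build)
qed

lemma constructed_child:
  assumes "is_TTS T" "constructed T V n" "c \<in> set (tC n)"
  shows "constructed T V c"
  using assms(2)
proof cases
  case (build S D \<Phi>)
  then show ?thesis
    using constructed_build_child[OF assms(1) build(2)] assms(3) by simp
next
  case (thin S D \<Phi> Z \<psi>)
  then have c: "c = unfold_node T V D \<Phi> (unfold_child T V D \<Phi> Z \<psi>)"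
    using assms(3) unfolding thin_node_def by simp
  have "wf_seq D \<Phi>"
    using thin(2) unfolding true_seq_def by blast
  then show ?thesis
    unfolding c using thin(3) by (rule constructed.unfold)
next
  case (unfold D \<Phi> Z \<psi>)
  then have c: "c = build T V (fixset T V D \<Phi>) (fixdefs D \<Phi>) (psubst Z (fixvar D \<Phi>) \<psi>)"
    using assms(3) unfolding unfold_node_def unfold_child_def by simp
  have "true_seq T V (fixset T V D \<Phi>) (fixdefs D \<Phi>) (psubst Z (fixvar D \<Phi>) \<psi>)"
    unfolding true_seq_def
    using wf_seq_fixdefs(2)[OF unfold(2,3)] fixset_subset_sats_unfold[OF unfold(2,3), of T V] ..
  then show ?thesis
    unfolding c by (rule constructed.build)
qed

lemma build_rule_ok:
  assumes "is_TTS T" "true_seq T V S D \<Phi>" "tC (build T V S D \<Phi>) \<noteq> []"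
  shows "\<exists>r. tR (build T V S D \<Phi>) = Some r \<and>
    rule_ok T r S D \<Phi> (map seq_of (tC (build T V S D \<Phi>)))"
proof -
  have sat: "sat T V D \<Phi> (sig T V D \<Phi> s) s" if "s \<in> S" for s
    using assms(2) that by (rule true_seq_sat)
  show ?thesis
  proof (cases \<Phi>)
    case (POr \<phi> \<psi>)
    have "S = or_left T V S D \<phi> \<psi> \<union> (S - or_left T V S D \<phi> \<psi>)"
      unfolding or_left_def by auto
    then show ?thesis
      using POr unfolding rule_ok_def by auto
  next
    case (PDia K \<psi>)
    then show ?thesis
      using dia_witness_spec[OF sat[unfolded PDia]] unfolding rule_ok_def by simp
  next
    case (PAll \<phi> \<psi>)
    then show ?thesis
      using all_witness_spec[OF assms(1) sat[unfolded PAll]]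
      unfolding rule_ok_def by (simp add: succs_lt_def succs_eq_def)
  next
    case (PEx \<phi> \<psi>)
    then show ?thesis
      using ex_witness_spec[OF sat[unfolded PEx]] unfolding rule_ok_def by simp
  next
    case (PNu Z \<psi>)
    then show ?thesis
      using fresh_fixvar[of D \<Phi>] by (auto simp: rule_ok_def fixdefs_def seq_of_def thin_node_def)
  next
    case (PMu Z \<psi>)
    then show ?thesis
      using fresh_fixvar[of D \<Phi>] by (auto simp: rule_ok_def fixdefs_def seq_of_def thin_node_def)
  qed (use assms(3) in \<open>auto simp: rule_ok_def\<close>)
qed

lemma constructed_rule_ok:
  assumes "is_TTS T" "constructed T V n" "tC n \<noteq> []"
  shows "\<exists>r. tR n = Some r \<and> rule_ok T r (tS n) (tD n) (tF n) (map seq_of (tC n))"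
  using assms(2)
proof cases
  case (build S D \<Phi>)
  then show ?thesis
    using build_rule_ok[OF assms(1) build(2)] assms(3) by simp
next
  case (thin S D \<Phi> Z \<psi>)
  then show ?thesis
    using subset_fixset[OF thin(2,3)] unfolding rule_ok_def seq_of_def thin_node_def unfold_node_def
    by simp
next
  case (unfold D \<Phi> Z \<psi>)
  then show ?thesis
    using map_of_fixdefs[of D \<Phi>] unfolding rule_ok_def seq_of_def unfold_node_def unfold_child_def
    by auto
qed

lemma constructed_leaf:
  assumes "constructed T V n" "tC n = []"
  shows "tR n = None \<and> (\<exists>Z. tF n = PVar Z \<or> tF n = PNegVar Z) \<and> true_seq T V (tS n) (tD n) (tF n)"
  using assms(1)
proof cases
  case (build S D \<Phi>)
  then show ?thesis
    using assms(2) by (cases \<Phi>) auto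
qed (use assms(2) in \<open>simp_all add: thin_node_def unfold_node_def\<close>)

lemma constructed_wf_seq:
  assumes "constructed T V n"
  shows "wf_seq (tD n) (tF n)"
  using assms
proof cases
  case (build S D \<Phi>)
  then show ?thesis
    unfolding true_seq_def by simp
next
  case (thin S D \<Phi> Z \<psi>)
  then show ?thesis
    using wf_seq_fixdefs(1)[OF _ thin(3)] unfolding true_seq_def thin_node_def by simp
next
  case (unfold D \<Phi> Z \<psi>)
  then show ?thesis
    using wf_seq_fixdefs(1)[OF unfold(2,3)] unfolding unfold_node_def by simp
qed

lemma constructed_child_defs:
  assumes "constructed T V n" "c \<in> set (tC n)"
  shows "\<exists>E. tD c = tD n @ E"
  using assms(1)
proof cases
  case (build S D \<Phi>)
  show ?thesis
  proof (cases "\<exists>Z \<psi>. is_fix \<Phi> Z \<psi>")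
    case True
    then obtain Z \<psi> where "is_fix \<Phi> Z \<psi>"
      by blast
    then show ?thesis
      using build(1) assms(2) by (simp add: build_fix[of \<Phi> Z \<psi>] thin_node_def fixdefs_def)
  next
    case False
    then show ?thesis
      using build_child_build[of c T V S D \<Phi>] build assms(2) unfolding true_seq_def by auto
  qed
qed (use assms(2) in \<open>auto simp: thin_node_def unfold_node_def unfold_child_def\<close>)

definition node_sig :: "('s, 'a) tts \<Rightarrow> (nat \<Rightarrow> 's set) \<Rightarrow> ('s, 'a) tab \<Rightarrow> 's \<Rightarrow> 's set list" where
  "node_sig T V n s = sig T V (tD n) (tF n) s"

definition is_mu_unfold :: "('s, 'a) tab \<Rightarrow> bool" where
  "is_mu_unfold n \<longleftrightarrow> tR n = Some R_Un \<and> (\<exists>U Z \<psi>. tF n = PVar U \<and> map_of (tD n) U = Some (PMu Z \<psi>))"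

lemma build_node_sig_step:
  assumes "is_TTS T" "true_seq T V S D \<Phi>" and n: "n = build T V S D \<Phi>"
    and i: "i < length (tC n)" and s: "s \<in> S" and s': "s' \<in> tS (tC n ! i)"
    and step: "node_step T n i s' s"
  shows "sig_le (take (length D) (node_sig T V (tC n ! i) s')) (sig T V D \<Phi> s)"
proof -
  have st: "sat T V D \<Phi> (sig T V D \<Phi> s) s"
    using assms(2) s by (rule true_seq_sat)
  show ?thesis
  proof (cases "\<exists>Z \<psi>. is_fix \<Phi> Z \<psi>")
    case True
    then obtain Z \<psi> where fx: "is_fix \<Phi> Z \<psi>"
      by blast
    then have c: "tC n ! i = thin_node T V S D \<Phi> (unfold_child T V D \<Phi> Z \<psi>)" and "s' = s"
      using n i step by (simp_all add: build_fix node_step_def)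
    from sat_fixdefs[OF fx st] obtain \<alpha>
      where "sat T V (fixdefs D \<Phi>) (PVar (fixvar D \<Phi>)) (sig T V D \<Phi> s @ [\<alpha>]) s" ..
    then have "sig_le (node_sig T V (tC n ! i) s') (sig T V D \<Phi> s @ [\<alpha>])"
      unfolding c node_sig_def thin_node_def \<open>s' = s\<close> tab.sel by (rule sig_le_sat)
    then have "sig_le (take (length D) (node_sig T V (tC n ! i) s'))
        (take (length D) (sig T V D \<Phi> s @ [\<alpha>]))"
      by (rule sig_le_take)
    then show ?thesis
      using sat_length[OF st] by simp
  next
    case False
    then have "sat T V D (tF (tC n ! i)) (sig T V D \<Phi> s) s'"
      using build_child_sat[OF assms(1,2)] n i s s' step by simp
    then have "sig_le (sig T V D (tF (tC n ! i)) s') (sig T V D \<Phi> s)"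
      by (rule sig_le_sat)
    moreover have "tD (tC n ! i) = D"
      using build_child_build[of "tC n ! i" T V S D \<Phi>] assms(2) n i False
      unfolding true_seq_def by auto
    ultimately show ?thesis
      unfolding node_sig_def by simp
  qed
qed

lemma unfold_node_sig_step:
  assumes "wf_seq D \<Phi>" "is_fix \<Phi> Z \<psi>" and n: "n = unfold_node T V D \<Phi> (unfold_child T V D \<Phi> Z \<psi>)"
    and s: "s \<in> tS n" and i: "i < length (tC n)" and step: "node_step T n i s' s"
  shows "sig_le (node_sig T V (tC n ! i) s') (node_sig T V n s) \<and>
    (is_mu_unfold n \<longrightarrow> sig_less (node_sig T V (tC n ! i) s') (node_sig T V n s))"
proof -
  have c: "tC n ! i = unfold_child T V D \<Phi> Z \<psi>" and "s' = s"
    using n i step by (simp_all add: unfold_node_def node_step_def)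
  have "s \<in> fixset T V D \<Phi>"
    using s n by (simp add: unfold_node_def)
  then have "sat T V (fixdefs D \<Phi>) (PVar (fixvar D \<Phi>)) (node_sig T V n s) s"
    unfolding fixset_def sats_def node_sig_def using n by (auto simp: unfold_node_def intro: sig_sat)
  from sat_unfold[OF assms(1,2) this] obtain \<tau>' where
    \<tau>': "sat T V (fixdefs D \<Phi>) (psubst Z (fixvar D \<Phi>) \<psi>) \<tau>' s" "sig_le \<tau>' (node_sig T V n s)"
      "\<Phi> = PMu Z \<psi> \<longrightarrow> sig_less \<tau>' (node_sig T V n s)"
    by blast
  have "node_sig T V (tC n ! i) s' = sig T V (fixdefs D \<Phi>) (psubst Z (fixvar D \<Phi>) \<psi>) s"
    unfolding c \<open>s' = s\<close> node_sig_def unfold_child_def by simp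
  then have le: "sig_le (node_sig T V (tC n ! i) s') \<tau>'"
    using sig_le_sat[OF \<tau>'(1)] by simp
  moreover have "is_mu_unfold n \<Longrightarrow> \<Phi> = PMu Z \<psi>"
    using assms(2) n map_of_fixdefs[of D \<Phi>] unfolding is_mu_unfold_def unfold_node_def by auto
  ultimately show ?thesis
    using sig_le_trans[OF le \<tau>'(2)] sig_le_less_trans[OF le] \<tau>'(3) by blast
qed

lemma node_sig_step:
  assumes "is_TTS T" "constructed T V n"
    and i: "i < length (tC n)" and s: "s \<in> tS n" and s': "s' \<in> tS (tC n ! i)"
    and step: "node_step T n i s' s"
  shows "sig_le (take (length (tD n)) (node_sig T V (tC n ! i) s')) (node_sig T V n s) \<and>
     (is_mu_unfold n \<longrightarrow> sig_less (take (length (tD n)) (node_sig T V (tC n ! i) s')) (node_sig T V n s))"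
  using assms(2)
proof cases
  case (build S D \<Phi>)
  then show ?thesis
    using build_node_sig_step[OF assms(1) build(2,1) i _ s' step] s
    unfolding node_sig_def is_mu_unfold_def by simp
next
  case (thin S D \<Phi> Z \<psi>)
  then show ?thesis
    using i step unfolding node_sig_def is_mu_unfold_def node_step_def thin_node_def unfold_node_def
    by simp
next
  case (unfold D \<Phi> Z \<psi>)
  note unfold
  moreover have "length (node_sig T V (tC n ! i) s') = length (tD n)"
    using unfold i unfolding node_sig_def unfold_child_def by (simp add: unfold_node_def)
  ultimately show ?thesis
    using unfold_node_sig_step[OF unfold(2,3,1) s i step] by simp
qed

text \<open>The definitions whose unfolding nodes lie strictly above a node: all of them, except the
  one just introduced at a thinning or unfolding node.\<close>

definition outer_defs :: "('s, 'a) tab \<Rightarrow> 'a deflist" where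
  "outer_defs n = (if tR n = Some R_Thin \<or> tR n = Some R_Un then butlast (tD n) else tD n)"

lemma constructed_unfold_node:
  assumes "constructed T V n" "tR n = Some R_Un"
  shows "\<exists>U \<Phi>. tF n = PVar U \<and> tD n = outer_defs n @ [(U, \<Phi>)] \<and> U \<notin> fst ` set (outer_defs n) \<and>
           tS n = sats T V (tD n) (PVar U)"
  using assms(1)
proof cases
  case (unfold D \<Phi> Z \<psi>)
  then show ?thesis
    using fixvar_notin_defs[of D \<Phi>]
    by (auto simp: unfold_node_def outer_defs_def fixdefs_def fixset_def)
qed (use assms(2) in \<open>auto simp: thin_node_def\<close>)

lemma constructed_child_outer_defs:
  assumes "constructed T V n" "c \<in> set (tC n)"
  shows "outer_defs c = (if tR n = Some R_Un then tD n else outer_defs n)"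
  using assms(1)
proof cases
  case (build S D \<Phi>)
  show ?thesis
  proof (cases "\<exists>Z \<psi>. is_fix \<Phi> Z \<psi>")
    case True
    then obtain Z \<psi> where "is_fix \<Phi> Z \<psi>"
      by blast
    then show ?thesis
      using build(1) assms(2)
      by (simp add: build_fix[of \<Phi> Z \<psi>] thin_node_def fixdefs_def outer_defs_def)
  next
    case False
    then obtain S' \<phi> where "c = build T V S' D \<phi>"
      using build_child_build[of c T V S D \<Phi>] build assms(2) unfolding true_seq_def by blast
    then show ?thesis
      using build(1) unfolding outer_defs_def by simp
  qed
qed (use assms(2) in \<open>auto simp: thin_node_def unfold_node_def unfold_child_def outer_defs_def
       fixdefs_def\<close>)

abbreviation node :: "('s, 'a) tab \<Rightarrow> nat list \<Rightarrow> ('s, 'a) tab" where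
  "node t p \<equiv> the (subt t p)"

lemma subt_snoc:
  "subt t (p @ [i]) =
     (case subt t p of None \<Rightarrow> None | Some n \<Rightarrow> if i < length (tC n) then Some (tC n ! i) else None)"
  by (induction p arbitrary: t) (auto split: option.splits)

lemma valid_append: "valid t (p @ q) \<Longrightarrow> valid t p"
  unfolding valid_def by (induction p arbitrary: t) (auto split: if_splits)

lemma valid_snoc:
  assumes "valid t (p @ [i])"
  shows "valid t p" "i < length (nC t p)" "node t (p @ [i]) = nC t p ! i"
proof -
  show "valid t p"
    using assms by (rule valid_append)
  then obtain n where "subt t p = Some n"
    unfolding valid_def by auto
  then show "i < length (nC t p)" "node t (p @ [i]) = nC t p ! i"
    using assms unfolding valid_def nC_def by (auto simp: subt_snoc split: if_splits)
qed

lemma below_snoc: "below m (p @ [i]) \<longleftrightarrow> below m p \<or> m = p"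
  unfolding below_def by (auto simp: append_eq_append_conv2 Cons_eq_append_conv)

lemma below_Nil[simp]: "\<not> below m []"
  unfolding below_def by simp

lemma below_neq: "below m n \<Longrightarrow> m \<noteq> n"
  unfolding below_def by auto

lemma below_linear: "below m p \<Longrightarrow> below m' p \<Longrightarrow> m = m' \<or> below m m' \<or> below m' m"
  unfolding below_def by (auto simp: append_eq_append_conv2)

lemma constructed_node:
  assumes "is_TTS T" "constructed T V t"
  shows "valid t p \<Longrightarrow> constructed T V (node t p)"
proof (induction p rule: rev_induct)
  case (snoc i p)
  then show ?case
    using valid_snoc[OF snoc.prems] constructed_child[OF assms(1)] unfolding nC_def by simp
qed (simp add: assms(2))

context
  fixes T :: "('s, 'a) tts" and V :: "nat \<Rightarrow> 's set" and t :: "('s, 'a) tab"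
  assumes TTS: "is_TTS T" and constructed_root: "constructed T V t" and root_defs: "tD t = []"
begin

lemma child_node:
  assumes "valid t (p @ [i])"
  shows "constructed T V (node t p)" "node t (p @ [i]) \<in> set (tC (node t p))"
  using valid_snoc[OF assms] constructed_node[OF TTS constructed_root] unfolding nC_def by auto

lemma ancestor_defs_prefix:
  "valid t p \<Longrightarrow> below m p \<Longrightarrow> valid t m \<and> (\<exists>E. nD t p = nD t m @ E)"
proof (induction p rule: rev_induct)
  case (snoc i p)
  obtain E where "tD (node t (p @ [i])) = tD (node t p) @ E"
    using constructed_child_defs[OF child_node[OF snoc.prems(1)]] by blast
  then show ?case
    using snoc valid_snoc(1)[OF snoc.prems(1)] unfolding below_snoc nD_def by force
qed simp

lemma unfold_ancestor_outer_def:
  "valid t p \<Longrightarrow> below m p \<Longrightarrow> nR t m = Some R_Un \<Longrightarrow>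
   \<exists>U. nF t m = PVar U \<and> U \<in> fst ` set (outer_defs (node t p))"
proof (induction p rule: rev_induct)
  case (snoc i p)
  note n = child_node[OF snoc.prems(1)]
  have "fst ` set (outer_defs (node t p)) \<subseteq> fst ` set (outer_defs (node t (p @ [i])))"
    using constructed_unfold_node[OF n(1)] constructed_child_outer_defs[OF n] by force
  moreover have "\<exists>U. nF t p = PVar U \<and> U \<in> fst ` set (outer_defs (node t (p @ [i])))"
    if "nR t p = Some R_Un"
    using that constructed_unfold_node[OF n(1)] constructed_child_outer_defs[OF n]
    unfolding nR_def nF_def by force
  ultimately show ?case
    using snoc valid_snoc(1)[OF snoc.prems(1)] unfolding below_snoc by blast
qed simp

lemma outer_def_unfold_ancestor:
  "valid t p \<Longrightarrow> U \<in> fst ` set (outer_defs (node t p)) \<Longrightarrow>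
   \<exists>m. below m p \<and> valid t m \<and> nF t m = PVar U \<and> nR t m = Some R_Un \<and>
       nS t m = sats T V (nD t m) (PVar U)"
proof (induction p rule: rev_induct)
  case Nil
  have "outer_defs t = []"
    using root_defs unfolding outer_defs_def by simp
  with Nil show ?case
    by simp
next
  case (snoc i p)
  note n = child_node[OF snoc.prems(1)]
  have "below p (p @ [i])"
    unfolding below_def by simp
  show ?case
  proof (cases "nR t p = Some R_Un \<and> nF t p = PVar U")
    case True
    then show ?thesis
      using \<open>below p (p @ [i])\<close> valid_snoc(1)[OF snoc.prems(1)] constructed_unfold_node[OF n(1)]
      unfolding nR_def nF_def nS_def nD_def by force
  next
    case False
    then have "U \<in> fst ` set (outer_defs (node t p))"
      using snoc.prems(2) constructed_unfold_node[OF n(1)] constructed_child_outer_defs[OF n]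
      unfolding nR_def nF_def by (force split: if_splits)
    then show ?thesis
      using snoc valid_snoc(1)[OF snoc.prems(1)] unfolding below_snoc by blast
  qed
qed

lemma unfold_ancestor_unique:
  assumes "valid t p" "below m p" "below m' p" "nR t m = Some R_Un" "nR t m' = Some R_Un"
    and "nF t m = nF t m'"
  shows "m = m'"
proof (rule ccontr)
  assume "m \<noteq> m'"
  have no_repeat: False if k: "below k k'" "valid t k'" "nR t k = Some R_Un" "nR t k' = Some R_Un"
    and eq: "nF t k = nF t k'" for k k'
  proof -
    obtain U where "nF t k = PVar U" "U \<in> fst ` set (outer_defs (node t k'))"
      using unfold_ancestor_outer_def[OF k(2,1,3)] by blast
    moreover obtain U' where "nF t k' = PVar U'" "U' \<notin> fst ` set (outer_defs (node t k'))"
      using constructed_unfold_node[OF constructed_node[OF TTS constructed_root k(2)]] k(4)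
      unfolding nR_def nF_def by blast
    ultimately show False
      using eq by simp
  qed
  have "valid t m" "valid t m'"
    using ancestor_defs_prefix assms(1-3) by blast+
  then show False
    using below_linear[OF assms(2,3)] \<open>m \<noteq> m'\<close> no_repeat assms(4-6) by metis
qed

abbreviation sig_at :: "nat list \<Rightarrow> nat list \<Rightarrow> 's \<Rightarrow> 's set list" where
  "sig_at n n' s' \<equiv> take (length (nD t n)) (node_sig T V (node t n') s')"

lemma tstep_sig_le:
  assumes "tstep T t n i s' s"
  shows "sig_le (sig_at n (n @ [i]) s') (node_sig T V (node t n) s) \<and>
    (is_mu_unfold (node t n) \<longrightarrow> sig_less (sig_at n (n @ [i]) s') (node_sig T V (node t n) s)) \<and>
    (\<exists>E. nD t (n @ [i]) = nD t n @ E)"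
proof -
  have v: "valid t (n @ [i])" and "s' \<in> nS t (n @ [i])" "s \<in> nS t n"
    using assms unfolding tstep_def by auto
  note c = valid_snoc[OF v] and n = child_node[OF v]
  have "node_step T (node t n) i s' s"
    using assms unfolding tstep_def node_step_def nR_def nF_def by simp
  then have "sig_le (take (length (tD (node t n))) (node_sig T V (tC (node t n) ! i) s')) (node_sig T V (node t n) s) \<and>
    (is_mu_unfold (node t n) \<longrightarrow>
       sig_less (take (length (tD (node t n))) (node_sig T V (tC (node t n) ! i) s')) (node_sig T V (node t n) s))"
    using node_sig_step[OF TTS n(1)] c \<open>s' \<in> nS t (n @ [i])\<close> \<open>s \<in> nS t n\<close>
    unfolding nC_def nS_def by simp
  moreover have "\<exists>E. nD t (n @ [i]) = nD t n @ E"
    using constructed_child_defs[OF n] unfolding nD_def by simp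
  ultimately show ?thesis
    using c unfolding nC_def nD_def by simp
qed

lemma ttrace_sig_le:
  "ttrace T t n' n s' s \<Longrightarrow> (\<exists>q. n' = n @ q) \<and> (\<exists>E. nD t n' = nD t n @ E) \<and>
    sig_le (sig_at n n' s') (node_sig T V (node t n) s) \<and>
    (n' \<noteq> n \<longrightarrow> is_mu_unfold (node t n) \<longrightarrow> sig_less (sig_at n n' s') (node_sig T V (node t n) s))"
proof (induction rule: ttrace.induct)
  case (refl n s)
  then show ?case
    unfolding node_sig_def nD_def by simp
next
  case (step n' n i s' s'' s)
  note step_le = tstep_sig_le[OF step.hyps(2)]
  obtain E where E: "nD t (n @ [i]) = nD t n @ E"
    using step_le by blast
  have "sig_le (take (length (nD t n)) (sig_at (n @ [i]) n' s'))
      (take (length (nD t n)) (node_sig T V (node t (n @ [i])) s''))"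
    using step.IH sig_le_take by blast
  then have le: "sig_le (sig_at n n' s') (sig_at n (n @ [i]) s'')"
    using E by (simp add: min_absorb1)
  show ?case
    using step.IH E step_le sig_le_trans[OF le] sig_le_less_trans[OF le] by auto
qed

lemma sig_at_comp_leaf:
  assumes "comp_node t m" "comp_leaf t m m'" "\<exists>E. nD t m' = nD t m @ E"
  shows "sig_at m m' s' = node_sig T V (node t m) s'"
proof -
  have m: "valid t m" "nR t m = Some R_Un"
    using assms(1) unfolding comp_node_def by auto
  have m': "valid t m'" "nF t m' = nF t m"
    using assms(2) by (simp_all add: comp_leaf.simps[of t m m'] is_leaf_def)
  obtain U \<Phi> where U: "nF t m = PVar U" "nD t m = outer_defs (node t m) @ [(U, \<Phi>)]"
    using constructed_unfold_node[OF constructed_node[OF TTS constructed_root m(1)]] m(2)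
    unfolding nR_def nF_def nD_def by blast
  obtain E where E: "nD t m' = nD t m @ E"
    using assms(3) by blast
  have "distinct (map fst (nD t m @ E))"
    using constructed_wf_seq[OF constructed_node[OF TTS constructed_root m'(1)]] E
    unfolding wf_seq_def wf_deflist_def nD_def by simp
  then show ?thesis
    using take_sig_PVar_append[of U "nD t m" E T V s'] U E m'(2)
    unfolding node_sig_def nD_def nF_def by simp
qed

lemma cm_ctr_sig_le:
  shows "cm T t m s' s \<Longrightarrow> sig_le (node_sig T V (node t m) s') (node_sig T V (node t m) s) \<and>
            (is_mu_unfold (node t m) \<longrightarrow> sig_less (node_sig T V (node t m) s') (node_sig T V (node t m) s))"
    and "ctr T t n' n s' s \<Longrightarrow> (\<exists>q. n' = n @ q) \<and> (\<exists>E. nD t n' = nD t n @ E) \<and>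
    sig_le (sig_at n n' s') (node_sig T V (node t n) s) \<and>
    (n' \<noteq> n \<longrightarrow> is_mu_unfold (node t n) \<longrightarrow> sig_less (sig_at n n' s') (node_sig T V (node t n) s))"
proof (induction rule: cm_ctr.inducts)
  case (cm_intro m m' s' s)
  then have "sig_at m m' s' = node_sig T V (node t m) s'"
    using sig_at_comp_leaf by blast
  then show ?case
    using cm_intro(2,5) below_neq by (metis comp_leaf.simps)
next
  case (ctr_trace n' n s' s)
  then show ?case
    using ttrace_sig_le by blast
next
  case (ctr_comp n' n s' s m u u')
  have tr: "(\<exists>q. m = n @ q) \<and> (\<exists>E. nD t m = nD t n @ E) \<and>
      sig_le (sig_at n m u) (node_sig T V (node t n) s) \<and>
      (m \<noteq> n \<longrightarrow> is_mu_unfold (node t n) \<longrightarrow> sig_less (sig_at n m u) (node_sig T V (node t n) s))"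
    using ttrace_sig_le[OF ctr_comp(11)] .
  have "sig_le (node_sig T V (node t m) u') (node_sig T V (node t m) u)"
    using ctr_comp(10)
  proof (induction rule: tranclp_induct)
    case (step y z)
    then show ?case
      using sig_le_trans by blast
  qed blast
  then have "sig_le (take (length (nD t n)) (node_sig T V (node t m) u')) (sig_at n m u)"
    by (rule sig_le_take)
  moreover obtain E where "nD t m = nD t n @ E"
    using tr by blast
  moreover have "sig_le (take (length (nD t n)) (sig_at m n' s'))
      (take (length (nD t n)) (node_sig T V (node t m) u'))"
    using ctr_comp(9) sig_le_take by blast
  ultimately have le: "sig_le (sig_at n n' s') (sig_at n m u)"
    using sig_le_trans by (simp add: min_absorb1)
  show ?case
    using ctr_comp(9,12) tr sig_le_trans[OF le] sig_le_less_trans[OF le] by auto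
qed

lemma wfP_cm_mu:
  assumes "is_mu_unfold (node t m)"
  shows "wfP (cm T t m)"
proof -
  have "{(x, y). cm T t m x y} \<subseteq> inv_image (lex wo_less) (node_sig T V (node t m))"
    using cm_ctr_sig_le(1) assms by auto
  then have "wf {(x, y). cm T t m x y}"
    using wf_subset[OF wf_inv_image[OF wf_lex[OF wf_wo_less]]] by blast
  then show ?thesis
    unfolding wfp_def .
qed

lemma leaf_props:
  assumes "is_leaf t p"
  shows "nR t p = None" "\<exists>Z. nF t p = PVar Z \<or> nF t p = PNegVar Z"
    "true_seq T V (nS t p) (nD t p) (nF t p)"
  using constructed_leaf[OF constructed_node[OF TTS constructed_root]] assms
  unfolding is_leaf_def nR_def nF_def nS_def nD_def nC_def by simp_all

lemma leaf_defined_var: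
  assumes "is_leaf t p" "Z \<in> fst ` set (nD t p)" "nF t p = PVar Z \<or> nF t p = PNegVar Z"
  shows "nF t p = PVar Z"
  using leaf_props(3)[OF assms(1)] assms(2,3) unfolding true_seq_def wf_seq_def by auto

lemma leaf_unfold_ancestor:
  assumes "is_leaf t p" "nF t p = PVar U" "U \<in> fst ` set (nD t p)"
  shows "\<exists>m. below m p \<and> comp_node t m \<and> nF t m = PVar U \<and> nS t p \<subseteq> nS t m \<and>
           map_of (nD t m) U = map_of (nD t p) U"
proof -
  have p: "valid t p"
    using assms(1) unfolding is_leaf_def by simp
  have "outer_defs (node t p) = nD t p"
    using leaf_props(1)[OF assms(1)] unfolding outer_defs_def nR_def nD_def by simp
  then obtain m where m: "below m p" "valid t m" "nF t m = PVar U" "nR t m = Some R_Un"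
    "nS t m = sats T V (nD t m) (PVar U)"
    using outer_def_unfold_ancestor[OF p] assms(3) by metis
  obtain E where E: "nD t p = nD t m @ E"
    using ancestor_defs_prefix[OF p m(1)] by blast
  have "U \<in> fst ` set (nD t m)"
    using constructed_unfold_node[OF constructed_node[OF TTS constructed_root m(2)]] m(3,4)
    unfolding nR_def nF_def nD_def by force
  moreover have "distinct (map fst (nD t m @ E))"
    using leaf_props(3)[OF assms(1)] E unfolding true_seq_def wf_seq_def wf_deflist_def by simp
  ultimately have "sats T V (nD t p) (PVar U) = nS t m"
    unfolding E m(5) by (rule sats_PVar_append)
  then have "nS t p \<subseteq> nS t m"
    using leaf_props(3)[OF assms(1)] assms(2) unfolding true_seq_def by simp
  moreover have "map_of (nD t m) U = map_of (nD t p) U"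
    using \<open>U \<in> fst ` set (nD t m)\<close> unfolding E
    by (auto simp: map_add_def split: option.split dest: map_of_eq_None_iff[THEN iffD1])
  ultimately show ?thesis
    using m unfolding comp_node_def by blast
qed

lemma mu_leaf_comp_leaf:
  assumes "is_leaf t n" "below m n" "comp_node t m" "nF t m = nF t n" "nS t n \<subseteq> nS t m"
  shows "comp_leaf t m n"
proof -
  have "m = m'" if "below m m'" "below m' n" "comp_node t m'" "comp_leaf t m' n" for m'
    using unfold_ancestor_unique[of n m m'] assms that
    unfolding is_leaf_def comp_node_def comp_leaf.simps[of t m' n] by metis
  then have "\<not> (\<exists>m'. if below m m' \<and> below m' n then comp_node t m' \<and> comp_leaf t m' n else False)"
    using below_neq by (metis (full_types))
  then show ?thesis
    using assms by (subst comp_leaf.simps) simp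
qed

lemma constructed_is_tableau: "is_tableau T t"
  unfolding is_tableau_def
proof (intro conjI allI impI)
  fix p
  assume p: "valid t p"
  have n: "constructed T V (node t p)"
    by (rule constructed_node[OF TTS constructed_root p])
  show "wf_sequent (nD t p) (nF t p)"
    using constructed_wf_seq[OF n] wf_seq_wf_sequent unfolding nD_def nF_def by blast
  show "if nC t p = [] then nR t p = None \<and> terminal T t p
        else \<exists>r. nR t p = Some r \<and> rule_ok T r (nS t p) (nD t p) (nF t p) (map seq_of (nC t p))"
  proof (cases "nC t p = []")
    case True
    then have leaf: "is_leaf t p"
      using p unfolding is_leaf_def by simp
    obtain Z where Z: "nF t p = PVar Z \<or> nF t p = PNegVar Z"
      using leaf_props(2)[OF leaf] by blast
    have "terminal T t p"
    proof (cases "Z \<in> fst ` set (nD t p)")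
      case True
      then show ?thesis
        using leaf_unfold_ancestor[OF leaf _ True] leaf_defined_var[OF leaf True Z]
        unfolding terminal_def by blast
    qed (use Z in \<open>auto simp: terminal_def\<close>)
    then show ?thesis
      using True leaf_props(1)[OF leaf] by simp
  next
    case False
    then show ?thesis
      using constructed_rule_ok[OF TTS n] unfolding nC_def nR_def nS_def nD_def nF_def by simp
  qed
qed (rule root_defs)

lemma leaf_free_var_successful:
  assumes "is_leaf t n" "nF t n = PVar Z \<or> nF t n = PNegVar Z" "Z \<notin> fst ` set (nD t n)"
  shows "successful_leaf T V t n"
proof -
  have "psem T (defs_val T V (nD t n) \<tau>) (PVar Z) = V Z" for \<tau>
    using assms(3) by (simp add: defs_val_notin)
  moreover have "nS t n \<subseteq> sats T V (nD t n) (nF t n)"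
    using leaf_props(3)[OF assms(1)] unfolding true_seq_def by blast
  ultimately have "nF t n = PVar Z \<Longrightarrow> nS t n \<subseteq> V Z" "nF t n = PNegVar Z \<Longrightarrow> nS t n \<inter> V Z = {}"
    unfolding sats_def sat_def by auto
  then show ?thesis
    using assms(2,3) unfolding successful_leaf_def by blast
qed

lemma leaf_defined_var_successful:
  assumes "is_leaf t n" "nF t n = PVar Z" "Z \<in> fst ` set (nD t n)"
  shows "successful_leaf T V t n"
proof -
  obtain m where m: "below m n" "comp_node t m" "nF t m = PVar Z" "nS t n \<subseteq> nS t m"
    "map_of (nD t m) Z = map_of (nD t n) Z"
    using leaf_unfold_ancestor[OF assms] by blast
  obtain \<phi> where \<phi>: "map_of (nD t n) Z = Some \<phi>"
    using assms(3) by (metis map_of_eq_None_iff not_Some_eq)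
  obtain Y \<psi> where "is_fix \<phi> Y \<psi>"
    using leaf_props(3)[OF assms(1)] map_of_SomeD[OF \<phi>] unfolding true_seq_def wf_seq_def by blast
  then show ?thesis
  proof
    assume "\<phi> = PNu Y \<psi>"
    then show ?thesis
      using assms(2) \<phi> unfolding successful_leaf_def by blast
  next
    assume mu: "\<phi> = PMu Y \<psi>"
    have "comp_leaf t m n"
      using mu_leaf_comp_leaf[OF assms(1) m(1,2)] m(3,4) assms(2) by simp
    moreover have "is_mu_unfold (node t m)"
      using m(2,3,5) \<phi> mu unfolding is_mu_unfold_def comp_node_def nR_def nF_def nD_def by simp
    ultimately show ?thesis
      using assms(2) \<phi> mu m(2) wfP_cm_mu unfolding successful_leaf_def by blast
  qed
qed

lemma constructed_successful: "successful T V t"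
  unfolding successful_def
proof (intro allI impI)
  fix n
  assume leaf: "is_leaf t n"
  obtain Z where Z: "nF t n = PVar Z \<or> nF t n = PNegVar Z"
    using leaf_props(2)[OF leaf] by blast
  show "successful_leaf T V t n"
  proof (cases "Z \<in> fst ` set (nD t n)")
    case True
    then show ?thesis
      using leaf_defined_var_successful[OF leaf _ True] leaf_defined_var[OF leaf True Z] by blast
  qed (use leaf_free_var_successful[OF leaf Z] in blast)
qed

end

theorem theorem7:
  fixes T :: "('s, 'a) tts" and V :: "nat \<Rightarrow> 's set" and S :: "'s set" and \<Phi> :: "'a pform"
  assumes "is_TTS T"
    and "wf_cform (to_core \<Phi>)"
    and "S \<subseteq> sem T V (to_core \<Phi>)"
  shows "\<exists>t. is_tableau T t \<and> seq_of t = (S, [], \<Phi>) \<and> successful T V t"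
proof -
  have "wf_seq [] \<Phi>"
    using assms(2) by (simp add: wf_seq_def wf_deflist_def wf_cform_to_core)
  moreover have "S \<subseteq> sats T V [] \<Phi>"
    using assms(3) unfolding sats_def sat_def by auto
  ultimately have "true_seq T V S [] \<Phi>"
    unfolding true_seq_def ..
  then have "constructed T V (build T V S [] \<Phi>)"
    by (rule constructed.build)
  then have "is_tableau T (build T V S [] \<Phi>)" "successful T V (build T V S [] \<Phi>)"
    using constructed_is_tableau[OF assms(1)] constructed_successful[OF assms(1)] build_root(2)
    by blast+
  then show ?thesis
    by (intro exI[of _ "build T V S [] \<Phi>"]) simp
qed

end
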